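(* Fix $T\ge1$, $K\ge2$, $V_T>0$ and a batch size $\Delta\in\{1,\dots,T\}$; partition $\{1,\dots,T\}$ into consecutive batches $\mathcal{T}_j=\{t:(j-1)\Delta+1\le t\le\min\{j\Delta,T\}\}$, $j=1,\dots,m=\lceil T/\Delta\rceil$. Suppose a policy $\pi$ runs, in each batch, a procedure (restarted at the start of the batch) such that for every $\mu\in\mathcal{V}$ and every batch $j$, \[ \mathbb{E}\Big[\max_{k\in\mathcal{K}}\sum_{t\in\mathcal{T}_j}X_t^k\Big]-\mathbb{E}^\pi\Big[\sum_{t\in\mathcal{T}_j}\mu_t^{\pi_t}\Big]\le B. \] Then $\mathcal{R}^\pi(\mathcal{V},T)\le \lceil T/\Delta\rceil\, B+2\Delta V_T$. In particular, for Exp3 restarted every $\Delta$ epochs with $\gamma=\min\{1,\sqrt{K\log K/((e-1)\Delta)}\}$, for which $B=2\sqrt{e-1}\sqrt{\Delta K\log K}$, one gets $\mathcal{R}^\pi(\mathcal{V},T)\le \big(\tfrac{T}{\Delta}+1\big)2\sqrt{e-1}\sqrt{\Delta K\log K}+2\Delta V_T$.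
   Context: Multi-armed bandit with arms $\mathcal{K}=\{1,\dots,K\}$ and epochs $t\in\{1,\dots,T\}$; pulling arm $k$ at epoch $t$ yields reward $X_t^k\in[0,1]$ with mean $\mu_t^k$, rewards independent across epochs and of the policy's randomization; $\mu_t^*=\max_k\mu_t^k$. $\mathcal{V}=\{\mu\in[0,1]^{K\times T}:\ \sum_{t=1}^{T-1}\sup_{k}|\mu_t^k-\mu_{t+1}^k|\le V_T\}$. Regret: $\mathcal{R}^{\pi}(\mathcal{V},T)=\sup_{\mu\in\mathcal{V}}\{\sum_{t=1}^T\mu_t^*-\mathbb{E}^\pi[\sum_{t=1}^T\mu_t^{\pi_t}]\}$. Exp3 with parameter $\gamma$: starting from weights $w^k=1$, at each epoch play arm $k$ with probability $p_t^k=(1-\gamma)w_t^k/\sum_{k'}w_t^{k'}+\gamma/K$, observe the reward $X_t^{k'}$ of the played arm $k'$, set $\hat X_t^{k'}=X_t^{k'}/p_t^{k'}$, $\hat X_t^k=0$ otherwise, and update $w_{t+1}^k=w_t^k\exp\{\gamma\hat X_t^k/K\}$. *)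

theory Defs
  imports "HOL-Probability.Probability"
begin

text \<open>Arms are 1..K, epochs are 1..T. The reward vector of epoch t is a function
  on the arms with values in [0,1]; its law is a probability measure on this space.\<close>

definition rewspace :: "nat \<Rightarrow> (nat \<Rightarrow> real) measure" where
  "rewspace K = PiM {1..K} (\<lambda>_. restrict_space borel {0..1::real})"

text \<open>An environment assigns to each epoch t the law nu t of the reward vector
  (X_t^1,...,X_t^K); rewards are independent across epochs, so the joint law of the
  whole reward table is the product measure.\<close>

definition omega :: "nat \<Rightarrow> (nat \<Rightarrow> (nat \<Rightarrow> real) measure) \<Rightarrow> (nat \<Rightarrow> nat \<Rightarrow> real) measure" where
  "omega T \<nu> = PiM {1..T} \<nu>"

definition mu :: "(nat \<Rightarrow> (nat \<Rightarrow> real) measure) \<Rightarrow> nat \<Rightarrow> nat \<Rightarrow> real" where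
  "mu \<nu> t k = (\<integral>y. y k \<partial>\<nu> t)"

definition mustar :: "nat \<Rightarrow> (nat \<Rightarrow> (nat \<Rightarrow> real) measure) \<Rightarrow> nat \<Rightarrow> real" where
  "mustar K \<nu> t = Max ((\<lambda>k. mu \<nu> t k) ` {1..K})"

definition Vset :: "nat \<Rightarrow> nat \<Rightarrow> real \<Rightarrow> (nat \<Rightarrow> nat \<Rightarrow> real) set" where
  "Vset K T VT = {m. (\<forall>t\<in>{1..T}. \<forall>k\<in>{1..K}. m t k \<in> {0..1}) \<and>
      (\<Sum>t=1..T-1. Max ((\<lambda>k. \<bar>m t k - m (t+1) k\<bar>) ` {1..K})) \<le> VT}"

definition envs :: "nat \<Rightarrow> nat \<Rightarrow> real \<Rightarrow> (nat \<Rightarrow> (nat \<Rightarrow> real) measure) set" where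
  "envs K T VT = {\<nu>. (\<forall>t\<in>{1..T}. prob_space (\<nu> t) \<and> sets (\<nu> t) = sets (rewspace K))
                       \<and> mu \<nu> \<in> Vset K T VT}"

text \<open>A (randomized, non-anticipating) policy: at epoch t, given the history
  [(arm played, reward observed)] of epochs 1..t-1, it draws the arm from a pmf. \<close>

definition hist :: "(nat \<Rightarrow> nat \<Rightarrow> real) \<Rightarrow> nat list \<Rightarrow> (nat \<times> real) list" where
  "hist x as = map (\<lambda>(s, a). (a, x s a)) (zip [1..<Suc (length as)] as)"

fun play :: "(nat \<Rightarrow> (nat \<times> real) list \<Rightarrow> nat pmf) \<Rightarrow> (nat \<Rightarrow> nat \<Rightarrow> real) \<Rightarrow> nat \<Rightarrow> nat list pmf" where
  "play \<pi> x 0 = return_pmf []"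
| "play \<pi> x (Suc n) = bind_pmf (play \<pi> x n) (\<lambda>as. map_pmf (\<lambda>a. as @ [a]) (\<pi> (Suc n) (hist x as)))"

definition valid_policy :: "nat \<Rightarrow> (nat \<Rightarrow> (nat \<times> real) list \<Rightarrow> nat pmf) \<Rightarrow> bool" where
  "valid_policy K \<pi> \<longleftrightarrow> (\<forall>t h. set_pmf (\<pi> t h) \<subseteq> {1..K})"

definition policy_measurable :: "nat \<Rightarrow> (nat \<Rightarrow> (nat \<times> real) list \<Rightarrow> nat pmf)
     \<Rightarrow> (nat \<Rightarrow> (nat \<Rightarrow> real) measure) \<Rightarrow> bool" where
  "policy_measurable T \<pi> \<nu> \<longleftrightarrow>
     (\<forall>n as. (\<lambda>x. pmf (play \<pi> x n) as) \<in> borel_measurable (omega T \<nu>))"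

text \<open>E^pi [ sum_{t in S} mu_t^{pi_t} ] (arm at epoch t is as ! (t-1)).\<close>

definition pol_reward :: "nat \<Rightarrow> (nat \<Rightarrow> (nat \<times> real) list \<Rightarrow> nat pmf)
     \<Rightarrow> (nat \<Rightarrow> (nat \<Rightarrow> real) measure) \<Rightarrow> nat set \<Rightarrow> real" where
  "pol_reward T \<pi> \<nu> S = (\<integral>x. measure_pmf.expectation (play \<pi> x T)
        (\<lambda>as. \<Sum>t\<in>S. mu \<nu> t (as ! (t - 1))) \<partial>omega T \<nu>)"

definition exp_max :: "nat \<Rightarrow> nat \<Rightarrow> (nat \<Rightarrow> (nat \<Rightarrow> real) measure) \<Rightarrow> nat set \<Rightarrow> real" where
  "exp_max K T \<nu> S = (\<integral>x. Max ((\<lambda>k. \<Sum>t\<in>S. x t k) ` {1..K}) \<partial>omega T \<nu>)"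

definition regret :: "nat \<Rightarrow> nat \<Rightarrow> real \<Rightarrow> (nat \<Rightarrow> (nat \<times> real) list \<Rightarrow> nat pmf) \<Rightarrow> ereal" where
  "regret K T VT \<pi> = (SUP \<nu>\<in>envs K T VT.
      ereal ((\<Sum>t=1..T. mustar K \<nu> t) - pol_reward T \<pi> \<nu> {1..T}))"

definition batch :: "nat \<Rightarrow> nat \<Rightarrow> nat \<Rightarrow> nat set" where
  "batch \<Delta> T j = {t. (j - 1) * \<Delta> + 1 \<le> t \<and> t \<le> min (j * \<Delta>) T}"

text \<open>Exp3 with parameter gamma, restarted at the beginning of every batch of length Delta.\<close>

definition exp3_prob :: "nat \<Rightarrow> real \<Rightarrow> (nat \<Rightarrow> real) \<Rightarrow> nat \<Rightarrow> real" where
  "exp3_prob K \<gamma> w k = (1 - \<gamma>) * w k / (\<Sum>k'\<in>{1..K}. w k') + \<gamma> / real K"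

definition exp3_step :: "nat \<Rightarrow> real \<Rightarrow> (nat \<Rightarrow> real) \<Rightarrow> nat \<times> real \<Rightarrow> (nat \<Rightarrow> real)" where
  "exp3_step K \<gamma> w ar = (case ar of (a, r) \<Rightarrow>
      w(a := w a * exp (\<gamma> * (r / exp3_prob K \<gamma> w a) / real K)))"

definition exp3_weights :: "nat \<Rightarrow> real \<Rightarrow> (nat \<times> real) list \<Rightarrow> (nat \<Rightarrow> real)" where
  "exp3_weights K \<gamma> h = foldl (exp3_step K \<gamma>) (\<lambda>_. 1) h"

definition exp3_restart :: "nat \<Rightarrow> nat \<Rightarrow> real \<Rightarrow> nat \<Rightarrow> (nat \<times> real) list \<Rightarrow> nat pmf" where
  "exp3_restart K \<Delta> \<gamma> t h = embed_pmf (\<lambda>k. if k \<in> {1..K}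
      then exp3_prob K \<gamma> (exp3_weights K \<gamma> (drop (((t - 1) div \<Delta>) * \<Delta>) h)) k else 0)"

end

theory Submission
  imports Defs
begin

text \<open>
  The regret of a batched policy is split batch by batch:
  in batch j the dynamic benchmark exceeds the static benchmark
  E[max_k sum_{t in T_j} X_t^k] by at most 2 Delta V_j, where V_j is the variation of
  the mean table inside the batch (every mean moves by at most V_j within the batch, and
  the batch has at most Delta epochs), while the static benchmark exceeds the policy's
  reward by at most B by hypothesis.  Summing over the ceil(T/Delta) batches, and using
  sum_j V_j <= V_T, gives the first claim (lemma regret_le_batch_bound).

  Conditionally on a fixed reward table the arm
  sequence is a finite random path; along each path the logarithm of the total Exp3
  weight grows by at most a quantity whose expectation is controlled through the
  unbiasedness of the importance-weighted reward estimates (the classical argument of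
  Auer et al.); integrating over the reward table then gives the batch bound.
\<close>

subsection \<open>The law of the arm path of a policy\<close>

definition arm_seqs :: "nat \<Rightarrow> nat \<Rightarrow> nat list set" where
  "arm_seqs K n = {as. length as = n \<and> set as \<subseteq> {1..K}}"

lemma finite_arm_seqs: "finite (arm_seqs K n)"
  unfolding arm_seqs_def using finite_lists_length_eq[of "{1..K}" n] by (simp add: conj_commute)

lemma arm_seqs_nth:
  assumes "bs \<in> arm_seqs K n" "1 \<le> t" "t \<le> n"
  shows "bs ! (t - 1) \<in> {1..K}"
proof -
  have "bs ! (t - 1) \<in> set bs" using assms by (auto simp: arm_seqs_def)
  then show ?thesis using assms unfolding arm_seqs_def by blast
qed

lemma arm_seqs_Suc: "arm_seqs K (Suc n) = (\<lambda>(as, a). as @ [a]) ` (arm_seqs K n \<times> {1..K})"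
proof
  show "arm_seqs K (Suc n) \<subseteq> (\<lambda>(as, a). as @ [a]) ` (arm_seqs K n \<times> {1..K})"
  proof
    fix bs assume bs: "bs \<in> arm_seqs K (Suc n)"
    then have "bs \<noteq> []" by (auto simp: arm_seqs_def)
    then have "bs = butlast bs @ [last bs]" by simp
    moreover have "butlast bs \<in> arm_seqs K n" "last bs \<in> {1..K}" using bs \<open>bs \<noteq> []\<close>
      by (auto simp: arm_seqs_def dest: in_set_butlastD) (metis last_in_set subsetD atLeastAtMost_iff)+
    ultimately show "bs \<in> (\<lambda>(as, a). as @ [a]) ` (arm_seqs K n \<times> {1..K})" by force
  qed
qed (auto simp: arm_seqs_def)

lemma hist_snoc: "hist x (as @ [a]) = hist x as @ [(a, x (Suc (length as)) a)]"
proof -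
  have "[1..<Suc (Suc (length as))] = [1..<Suc (length as)] @ [Suc (length as)]" by simp
  then show ?thesis unfolding hist_def by (simp del: upt_Suc add: zip_append)
qed

lemma length_hist[simp]: "length (hist x as) = length as"
  unfolding hist_def by (simp del: upt_Suc)

lemma set_play:
  assumes "valid_policy K \<pi>"
  shows "set_pmf (play \<pi> x n) \<subseteq> arm_seqs K n"
proof (induction n)
  case 0 then show ?case by (simp add: arm_seqs_def)
next
  case (Suc n)
  then show ?case using assms unfolding valid_policy_def arm_seqs_def by (force simp: subset_iff)
qed

lemma pmf_play_Suc:
  "pmf (play \<pi> x (Suc n)) bs = (if bs = [] then 0 else
     pmf (play \<pi> x n) (butlast bs) * pmf (\<pi> (Suc n) (hist x (butlast bs))) (last bs))"
proof (cases "bs = []")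
  case True
  have "\<And>as. pmf (map_pmf (\<lambda>a. as @ [a]) (\<pi> (Suc n) (hist x as))) [] = 0"
    by (rule pmf_map_outside) auto
  then show ?thesis using True by (simp add: pmf_bind del: pmf_map)
next
  case False
  let ?b = "butlast bs"
  have step: "pmf (map_pmf (\<lambda>a. as @ [a]) (\<pi> (Suc n) (hist x as))) bs =
        (if as = ?b then pmf (\<pi> (Suc n) (hist x ?b)) (last bs) else 0)" for as
  proof (cases "as = ?b")
    case True
    have "pmf (map_pmf (\<lambda>a. as @ [a]) (\<pi> (Suc n) (hist x as))) ((\<lambda>a. as @ [a]) (last bs))
          = pmf (\<pi> (Suc n) (hist x as)) (last bs)"
      by (rule pmf_map_inj') (auto simp: inj_def)
    with True False show ?thesis by simp
  next
    case False
    then have "bs \<notin> (\<lambda>a. as @ [a]) ` set_pmf (\<pi> (Suc n) (hist x as))" by auto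
    then show ?thesis using False by (simp add: pmf_map_outside)
  qed
  have "pmf (play \<pi> x (Suc n)) bs =
        (\<integral>as. (if as = ?b then pmf (\<pi> (Suc n) (hist x ?b)) (last bs) else 0) \<partial>measure_pmf (play \<pi> x n))"
    by (simp add: pmf_bind step del: pmf_map)
  also have "\<dots> = pmf (play \<pi> x n) ?b * pmf (\<pi> (Suc n) (hist x ?b)) (last bs)"
    by (subst integral_measure_pmf_real[of "{?b}"]) (auto split: if_splits)
  finally show ?thesis using False by simp
qed

lemma expectation_play:
  assumes "valid_policy K \<pi>"
  shows "measure_pmf.expectation (play \<pi> x n) f = (\<Sum>as\<in>arm_seqs K n. pmf (play \<pi> x n) as * f as)"
  using set_play[OF assms] finite_arm_seqs
  by (subst integral_measure_pmf_real[of "arm_seqs K n"]) (auto simp: mult.commute)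

lemma sum_play_one:
  assumes "valid_policy K \<pi>"
  shows "(\<Sum>as\<in>arm_seqs K n. pmf (play \<pi> x n) as) = 1"
  using sum_pmf_eq_1[OF finite_arm_seqs set_play[OF assms]] .

lemma sum_play_Suc:
  "(\<Sum>bs\<in>arm_seqs K (Suc n). pmf (play \<pi> x (Suc n)) bs * f bs) =
   (\<Sum>as\<in>arm_seqs K n. pmf (play \<pi> x n) as *
      (\<Sum>a\<in>{1..K}. pmf (\<pi> (Suc n) (hist x as)) a * f (as @ [a])))"
proof -
  have inj: "inj_on (\<lambda>(as, a). as @ [a]) (arm_seqs K n \<times> {1..K})" by (auto simp: inj_on_def)
  show ?thesis
    unfolding arm_seqs_Suc sum.reindex[OF inj] sum_distrib_left sum.cartesian_product
    by (intro sum.cong) (auto simp: pmf_play_Suc mult.assoc simp del: play.simps)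
qed

lemma sum_play_take:
  assumes v: "valid_policy K \<pi>" and "m \<le> n"
  shows "(\<Sum>bs\<in>arm_seqs K n. pmf (play \<pi> x n) bs * f (take m bs)) =
         (\<Sum>as\<in>arm_seqs K m. pmf (play \<pi> x m) as * f as)"
  using assms(2)
proof (induction n)
  case 0 then show ?case by (simp add: arm_seqs_def)
next
  case (Suc n)
  show ?case
  proof (cases "m = Suc n")
    case True
    then show ?thesis by (intro sum.cong) (auto simp: arm_seqs_def)
  next
    case False
    then have mn: "m \<le> n" using Suc by simp
    have one: "(\<Sum>a\<in>{1..K}. pmf (\<pi> (Suc n) h) a) = 1" for h
      using v unfolding valid_policy_def by (intro sum_pmf_eq_1) auto
    have "(\<Sum>bs\<in>arm_seqs K (Suc n). pmf (play \<pi> x (Suc n)) bs * f (take m bs)) =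
      (\<Sum>as\<in>arm_seqs K n. pmf (play \<pi> x n) as *
         (\<Sum>a\<in>{1..K}. pmf (\<pi> (Suc n) (hist x as)) a * f (take m as)))"
      unfolding sum_play_Suc by (intro sum.cong refl arg_cong2[where f="(*)"]) (auto simp: arm_seqs_def mn)
    also have "\<dots> = (\<Sum>as\<in>arm_seqs K n. pmf (play \<pi> x n) as * f (take m as))"
      using one by (simp add: sum_distrib_right[symmetric])
    finally show ?thesis using Suc.IH[OF mn] by simp
  qed
qed

lemma play_cong:
  "(\<And>s. s < n \<Longrightarrow> x s = y s) \<Longrightarrow> play \<pi> x n = play \<pi> y n"
proof (induction n)
  case 0 then show ?case by simp
next
  case (Suc n)
  have IH: "play \<pi> x n = play \<pi> y n" using Suc by simp
  show ?case
  proof (simp only: play.simps IH, intro bind_pmf_cong refl)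
    fix as assume "as \<in> set_pmf (play \<pi> y n)"
    then have "length as = n" by (induction n arbitrary: as) auto
    then have "hist x as = hist y as" using Suc.prems
      by (auto simp: hist_def set_zip nth_upt simp del: upt_Suc)
    then show "map_pmf (\<lambda>a. as @ [a]) (\<pi> (Suc n) (hist x as)) =
               map_pmf (\<lambda>a. as @ [a]) (\<pi> (Suc n) (hist y as))"
      by simp
  qed
qed

subsection \<open>The probability space of reward tables\<close>

lemma space_rewspace: "space (rewspace K) = (\<Pi>\<^sub>E k\<in>{1..K}. {0..1::real})"
  unfolding rewspace_def by (simp add: space_PiM space_restrict_space)

lemma envs_D:
  assumes "\<nu> \<in> envs K T VT" "t \<in> {1..T}"
  shows "prob_space (\<nu> t)" "sets (\<nu> t) = sets (rewspace K)" "space (\<nu> t) = space (rewspace K)"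
proof -
  show "prob_space (\<nu> t)" "sets (\<nu> t) = sets (rewspace K)" using assms unfolding envs_def by auto
  then show "space (\<nu> t) = space (rewspace K)" by (intro sets_eq_imp_space_eq) simp
qed

lemma space_omega:
  assumes "\<nu> \<in> envs K T VT" "x \<in> space (omega T \<nu>)"
  shows "t \<in> {1..T} \<Longrightarrow> k \<in> {1..K} \<Longrightarrow> 0 \<le> x t k \<and> x t k \<le> 1"
    and "t \<notin> {1..T} \<Longrightarrow> x t = undefined"
    and "t \<in> {1..T} \<Longrightarrow> k \<notin> {1..K} \<Longrightarrow> x t k = undefined"
proof -
  have x: "x \<in> (\<Pi>\<^sub>E t\<in>{1..T}. space (\<nu> t))" using assms(2) unfolding omega_def by (simp add: space_PiM)
  show "t \<in> {1..T} \<Longrightarrow> k \<in> {1..K} \<Longrightarrow> 0 \<le> x t k \<and> x t k \<le> 1"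
    using x envs_D(3)[OF assms(1)] unfolding space_rewspace by (auto simp: PiE_iff)
  show "t \<notin> {1..T} \<Longrightarrow> x t = undefined" using x by (auto simp: PiE_iff extensional_def)
  show "t \<in> {1..T} \<Longrightarrow> k \<notin> {1..K} \<Longrightarrow> x t k = undefined"
    using x envs_D(3)[OF assms(1)] unfolding space_rewspace by (auto simp: PiE_iff extensional_def)
qed

lemma prob_omega:
  assumes "\<nu> \<in> envs K T VT"
  shows "prob_space (omega T \<nu>)"
  unfolding omega_def using envs_D(1)[OF assms] by (intro prob_space_PiM) auto

lemma arm_reward_measurable:
  assumes \<nu>: "\<nu> \<in> envs K T VT" and t: "t \<in> {1..T}" and k: "k \<in> {1..K}"
  shows "(\<lambda>y. y k) \<in> borel_measurable (\<nu> t)"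
proof -
  have "(\<lambda>y. y k) \<in> measurable (rewspace K) (restrict_space borel {0..1::real})"
    unfolding rewspace_def using k by (rule measurable_component_singleton)
  moreover have "(\<lambda>y. y) \<in> measurable (restrict_space borel {0..1::real}) borel"
    by (intro measurable_restrict_space1) simp
  ultimately have "(\<lambda>y. y k) \<in> measurable (rewspace K) borel"
    using measurable_comp by (fastforce simp: comp_def)
  then show ?thesis using envs_D(2)[OF \<nu> t] measurable_cong_sets by blast
qed

lemma coord_meas:
  assumes \<nu>: "\<nu> \<in> envs K T VT"
  shows "(\<lambda>x. x t k) \<in> borel_measurable (omega T \<nu>)"
proof (cases "t \<in> {1..T}")
  case t: True
  show ?thesis
  proof (cases "k \<in> {1..K}")
    case True
    have "(\<lambda>x. x t) \<in> measurable (omega T \<nu>) (\<nu> t)"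
      unfolding omega_def using t by (rule measurable_component_singleton)
    then show ?thesis using arm_reward_measurable[OF \<nu> t True] measurable_comp by (fastforce simp: comp_def)
  next
    case False
    have "((\<lambda>x. x t k) \<in> borel_measurable (omega T \<nu>)) = ((\<lambda>x. undefined :: real) \<in> borel_measurable (omega T \<nu>))"
      by (rule measurable_cong) (simp add: space_omega(3)[OF \<nu> _ t False])
    then show ?thesis by simp
  qed
next
  case False
  have "((\<lambda>x. x t k) \<in> borel_measurable (omega T \<nu>)) =
        ((\<lambda>x. (undefined :: nat \<Rightarrow> real) k) \<in> borel_measurable (omega T \<nu>))"
    by (rule measurable_cong) (simp add: space_omega(2)[OF \<nu> _ False])
  then show ?thesis by simp
qed

lemma coord_int:
  assumes \<nu>: "\<nu> \<in> envs K T VT" and t: "t \<in> {1..T}" and k: "k \<in> {1..K}"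
  shows "integrable (omega T \<nu>) (\<lambda>x. x t k)" "(\<integral>x. x t k \<partial>omega T \<nu>) = mu \<nu> t k"
proof -
  interpret P: prob_space "omega T \<nu>" by (rule prob_omega[OF \<nu>])
  show "integrable (omega T \<nu>) (\<lambda>x. x t k)"
  proof (rule P.integrable_const_bound[where B=1])
    show "AE x in omega T \<nu>. norm (x t k) \<le> 1"
      using space_omega(1)[OF \<nu> _ t k] by (intro AE_I2) auto
  qed (rule coord_meas[OF \<nu>])
  have d: "distr (omega T \<nu>) (\<nu> t) (\<lambda>\<omega>. \<omega> t) = \<nu> t"
    unfolding omega_def using envs_D(1)[OF \<nu>] t by (intro distr_PiM_component) auto
  have m: "(\<lambda>\<omega>. \<omega> t) \<in> measurable (omega T \<nu>) (\<nu> t)"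
    unfolding omega_def using t by (rule measurable_component_singleton)
  show "(\<integral>x. x t k \<partial>omega T \<nu>) = mu \<nu> t k"
    unfolding mu_def using integral_distr[OF m arm_reward_measurable[OF \<nu> t k]] d by simp
qed

lemma integrable_pmf_play_mult:
  assumes \<nu>: "\<nu> \<in> envs K T VT" and pm: "policy_measurable T \<pi> \<nu>"
    and g: "g \<in> borel_measurable (omega T \<nu>)" "\<And>x. x \<in> space (omega T \<nu>) \<Longrightarrow> \<bar>g x\<bar> \<le> c"
  shows "integrable (omega T \<nu>) (\<lambda>x. pmf (play \<pi> x n) cs * g x)"
proof -
  interpret P: prob_space "omega T \<nu>" by (rule prob_omega[OF \<nu>])
  show ?thesis
  proof (rule P.integrable_const_bound[where B=c])
    show "AE x in omega T \<nu>. norm (pmf (play \<pi> x n) cs * g x) \<le> c"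
    proof (rule AE_I2)
      fix x assume x: "x \<in> space (omega T \<nu>)"
      have "pmf (play \<pi> x n) cs * \<bar>g x\<bar> \<le> 1 * \<bar>g x\<bar>"
        by (intro mult_right_mono pmf_le_1) simp
      then show "norm (pmf (play \<pi> x n) cs * g x) \<le> c" using g(2)[OF x] by (simp add: abs_mult)
    qed
    show "(\<lambda>x. pmf (play \<pi> x n) cs * g x) \<in> borel_measurable (omega T \<nu>)"
    proof -
      have "(\<lambda>x. pmf (play \<pi> x n) cs) \<in> borel_measurable (omega T \<nu>)"
        using pm unfolding policy_measurable_def by blast
      then show ?thesis using g(1) by measurable
    qed
  qed
qed

lemma integrable_pmf_play_reward:
  assumes \<nu>: "\<nu> \<in> envs K T VT" and pm: "policy_measurable T \<pi> \<nu>"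
    and t: "t \<in> {1..T}" and a: "a \<in> {1..K}"
  shows "integrable (omega T \<nu>) (\<lambda>x. pmf (play \<pi> x n) cs * x t a)"
  using space_omega(1)[OF \<nu> _ t a]
  by (intro integrable_pmf_play_mult[OF \<nu> pm coord_meas[OF \<nu>], where c=1]) auto

lemma integrable_pmf_play_const:
  assumes \<nu>: "\<nu> \<in> envs K T VT" and pm: "policy_measurable T \<pi> \<nu>"
  shows "integrable (omega T \<nu>) (\<lambda>x. pmf (play \<pi> x n) cs * c)"
  by (rule integrable_pmf_play_mult[OF \<nu> pm, where c="\<bar>c\<bar>"]) auto

text \<open>To use the product structure of the sample space we extend the family of reward
  laws to a family of probability spaces indexed by all epochs.\<close>

definition env_ext :: "(nat \<Rightarrow> (nat \<Rightarrow> real) measure) \<Rightarrow> nat \<Rightarrow> nat \<Rightarrow> (nat \<Rightarrow> real) measure" where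
  "env_ext \<nu> T i = (if i \<in> {1..T} then \<nu> i else return (count_space UNIV) (\<lambda>_. 0))"

lemma prob_space_env_ext:
  assumes "\<nu> \<in> envs K T VT"
  shows "prob_space (env_ext \<nu> T i)"
  unfolding env_ext_def using envs_D(1)[OF assms] by (auto intro: prob_space_return)

lemma omega_env_ext: "omega T \<nu> = PiM {1..T} (env_ext \<nu> T)"
  unfolding omega_def by (rule PiM_cong) (auto simp: env_ext_def)

text \<open>Independence: the path up to epoch t does not depend on the rewards of epoch t, so
  integrating out the reward vector of epoch t replaces X_t^a by its mean mu_t^a.\<close>

lemma integral_pmf_play_reward:
  assumes \<nu>: "\<nu> \<in> envs K T VT" and pm: "policy_measurable T \<pi> \<nu>"
    and t: "t \<in> {1..T}" and a: "a \<in> {1..K}"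
  shows "(\<integral>x. pmf (play \<pi> x t) cs * x t a \<partial>omega T \<nu>) =
         (\<integral>x. pmf (play \<pi> x t) cs * mu \<nu> t a \<partial>omega T \<nu>)"
proof -
  let ?M = "env_ext \<nu> T"
  interpret PS: product_prob_space ?M "{1..T}"
    by (intro product_prob_space.intro product_sigma_finite.intro product_prob_space_axioms.intro)
       (auto intro: prob_space_imp_sigma_finite prob_space_env_ext[OF \<nu>])
  define I where "I = {1..T} - {t}"
  have IT: "insert t I = {1..T}" "finite I" "t \<notin> I" using t unfolding I_def by auto
  have Mt: "?M t = \<nu> t" using t by (simp add: env_ext_def)
  have upd: "play \<pi> (x(t := y)) t = play \<pi> x t" for x y
    by (rule play_cong) auto
  have "(\<integral>x. pmf (play \<pi> x t) cs * x t a \<partial>omega T \<nu>) =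
        (\<integral>x. (\<integral>y. pmf (play \<pi> (x(t := y)) t) cs * (x(t := y)) t a \<partial>?M t) \<partial>PiM I ?M)"
    using integrable_pmf_play_reward[OF \<nu> pm t a] unfolding omega_env_ext IT(1)[symmetric]
    by (rule PS.product_integral_insert[OF IT(2,3)])
  also have "\<dots> = (\<integral>x. pmf (play \<pi> x t) cs * mu \<nu> t a \<partial>PiM I ?M)"
    unfolding upd Mt mu_def by simp
  also have "\<dots> = (\<integral>x. (\<integral>y. pmf (play \<pi> (x(t := y)) t) cs * mu \<nu> t a \<partial>?M t) \<partial>PiM I ?M)"
    unfolding upd Mt using prob_space.prob_space[OF envs_D(1)[OF \<nu> t]] by simp
  also have "\<dots> = (\<integral>x. pmf (play \<pi> x t) cs * mu \<nu> t a \<partial>omega T \<nu>)"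
    using integrable_pmf_play_const[OF \<nu> pm] unfolding omega_env_ext IT(1)[symmetric]
    by (rule PS.product_integral_insert[OF IT(2,3), symmetric])
  finally show ?thesis .
qed

lemma integral_played_reward:
  assumes \<nu>: "\<nu> \<in> envs K T VT" and v: "valid_policy K \<pi>" and pm: "policy_measurable T \<pi> \<nu>"
    and t: "t \<in> {1..T}"
  shows "(\<integral>x. (\<Sum>bs\<in>arm_seqs K T. pmf (play \<pi> x T) bs * x t (bs ! (t - 1))) \<partial>omega T \<nu>)
       = (\<integral>x. (\<Sum>bs\<in>arm_seqs K T. pmf (play \<pi> x T) bs * mu \<nu> t (bs ! (t - 1))) \<partial>omega T \<nu>)"
proof -
  have marginal: "(\<Sum>bs\<in>arm_seqs K T. pmf (play \<pi> x T) bs * h (bs ! (t - 1))) =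
             (\<Sum>cs\<in>arm_seqs K t. pmf (play \<pi> x t) cs * h (cs ! (t - 1)))" for x and h :: "nat \<Rightarrow> real"
  proof -
    have "(\<Sum>bs\<in>arm_seqs K T. pmf (play \<pi> x T) bs * h (bs ! (t - 1))) =
          (\<Sum>bs\<in>arm_seqs K T. pmf (play \<pi> x T) bs * (\<lambda>cs. h (cs ! (t - 1))) (take t bs))"
      using t by (intro sum.cong refl) (auto simp: arm_seqs_def)
    also have "\<dots> = (\<Sum>cs\<in>arm_seqs K t. pmf (play \<pi> x t) cs * h (cs ! (t - 1)))"
      using t by (intro sum_play_take[OF v]) auto
    finally show ?thesis .
  qed
  have a: "cs \<in> arm_seqs K t \<Longrightarrow> cs ! (t - 1) \<in> {1..K}" for cs
    using arm_seqs_nth[of cs K t t] t by auto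
  have "(\<integral>x. (\<Sum>cs\<in>arm_seqs K t. pmf (play \<pi> x t) cs * x t (cs ! (t - 1))) \<partial>omega T \<nu>)
      = (\<Sum>cs\<in>arm_seqs K t. (\<integral>x. pmf (play \<pi> x t) cs * x t (cs ! (t - 1)) \<partial>omega T \<nu>))"
    by (rule Bochner_Integration.integral_sum) (rule integrable_pmf_play_reward[OF \<nu> pm t a])
  also have "\<dots> = (\<Sum>cs\<in>arm_seqs K t. (\<integral>x. pmf (play \<pi> x t) cs * mu \<nu> t (cs ! (t - 1)) \<partial>omega T \<nu>))"
    using integral_pmf_play_reward[OF \<nu> pm t a] by simp
  also have "\<dots> = (\<integral>x. (\<Sum>cs\<in>arm_seqs K t. pmf (play \<pi> x t) cs * mu \<nu> t (cs ! (t - 1))) \<partial>omega T \<nu>)"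
    by (rule Bochner_Integration.integral_sum[symmetric]) (rule integrable_pmf_play_const[OF \<nu> pm])
  finally show ?thesis unfolding marginal .
qed

lemma integrable_collected_reward:
  assumes \<nu>: "\<nu> \<in> envs K T VT" and pm: "policy_measurable T \<pi> \<nu>" and S: "S \<subseteq> {1..T}"
  shows "integrable (omega T \<nu>) (\<lambda>x. \<Sum>bs\<in>arm_seqs K T. pmf (play \<pi> x T) bs * (\<Sum>t\<in>S. x t (bs ! (t - 1))))"
  unfolding sum_distrib_left
  using S arm_seqs_nth[of _ K T] subsetD[OF S]
  by (intro Bochner_Integration.integrable_sum integrable_pmf_play_reward[OF \<nu> pm]) auto

lemma pol_reward_collected:
  assumes \<nu>: "\<nu> \<in> envs K T VT" and v: "valid_policy K \<pi>" and pm: "policy_measurable T \<pi> \<nu>"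
    and S: "S \<subseteq> {1..T}"
  shows "pol_reward T \<pi> \<nu> S =
         (\<integral>x. (\<Sum>bs\<in>arm_seqs K T. pmf (play \<pi> x T) bs * (\<Sum>t\<in>S. x t (bs ! (t - 1)))) \<partial>omega T \<nu>)"
proof -
  have swap: "(\<Sum>bs\<in>arm_seqs K T. pmf (play \<pi> x T) bs * (\<Sum>t\<in>S. f t bs)) =
              (\<Sum>t\<in>S. \<Sum>bs\<in>arm_seqs K T. pmf (play \<pi> x T) bs * f t bs)" for x f
    by (simp add: sum_distrib_left sum.swap[of _ S])
  have "pol_reward T \<pi> \<nu> S =
        (\<integral>x. (\<Sum>t\<in>S. \<Sum>bs\<in>arm_seqs K T. pmf (play \<pi> x T) bs * mu \<nu> t (bs ! (t - 1))) \<partial>omega T \<nu>)"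
    unfolding pol_reward_def expectation_play[OF v] swap ..
  also have "\<dots> = (\<Sum>t\<in>S. \<integral>x. (\<Sum>bs\<in>arm_seqs K T. pmf (play \<pi> x T) bs * mu \<nu> t (bs ! (t - 1))) \<partial>omega T \<nu>)"
    by (intro Bochner_Integration.integral_sum Bochner_Integration.integrable_sum
          integrable_pmf_play_const[OF \<nu> pm])
  also have "\<dots> = (\<Sum>t\<in>S. \<integral>x. (\<Sum>bs\<in>arm_seqs K T. pmf (play \<pi> x T) bs * x t (bs ! (t - 1))) \<partial>omega T \<nu>)"
    using integral_played_reward[OF \<nu> v pm] S by (intro sum.cong) auto
  also have "\<dots> = (\<integral>x. (\<Sum>t\<in>S. \<Sum>bs\<in>arm_seqs K T. pmf (play \<pi> x T) bs * x t (bs ! (t - 1))) \<partial>omega T \<nu>)"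
    using S arm_seqs_nth[of _ K T] subsetD[OF S]
    by (intro Bochner_Integration.integral_sum[symmetric] Bochner_Integration.integrable_sum
          integrable_pmf_play_reward[OF \<nu> pm]) auto
  finally show ?thesis unfolding swap .
qed

lemma integrable_max_reward:
  assumes \<nu>: "\<nu> \<in> envs K T VT" and K: "K \<ge> 1" and S: "S \<subseteq> {1..T}"
  shows "integrable (omega T \<nu>) (\<lambda>x. Max ((\<lambda>k. \<Sum>t\<in>S. x t k) ` {1..K}))"
proof -
  interpret P: prob_space "omega T \<nu>" by (rule prob_omega[OF \<nu>])
  show ?thesis
  proof (rule P.integrable_const_bound[where B="real (card S)"])
    show "AE x in omega T \<nu>. norm (Max ((\<lambda>k. \<Sum>t\<in>S. x t k) ` {1..K})) \<le> real (card S)"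
    proof (rule AE_I2)
      fix x assume x: "x \<in> space (omega T \<nu>)"
      obtain k where k: "k \<in> {1..K}" and mk: "Max ((\<lambda>k. \<Sum>t\<in>S. x t k) ` {1..K}) = (\<Sum>t\<in>S. x t k)"
        using Max_in[of "(\<lambda>k. \<Sum>t\<in>S. x t k) ` {1..K}"] K by fastforce
      have b: "0 \<le> x t k \<and> x t k \<le> 1" if "t \<in> S" for t using space_omega(1)[OF \<nu> x _ k] that S by auto
      have "0 \<le> (\<Sum>t\<in>S. x t k)" using b by (intro sum_nonneg) auto
      moreover have "(\<Sum>t\<in>S. x t k) \<le> (\<Sum>t\<in>S. 1)" using b by (intro sum_mono) auto
      ultimately show "norm (Max ((\<lambda>k. \<Sum>t\<in>S. x t k) ` {1..K})) \<le> real (card S)" using mk by simp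
    qed
    show "(\<lambda>x. Max ((\<lambda>k. \<Sum>t\<in>S. x t k) ` {1..K})) \<in> borel_measurable (omega T \<nu>)"
      using coord_meas[OF \<nu>] by (intro borel_measurable_Max borel_measurable_sum) auto
  qed
qed

lemma exp_max_ge:
  assumes \<nu>: "\<nu> \<in> envs K T VT" and S: "S \<subseteq> {1..T}" and k0: "k0 \<in> {1..K}"
  shows "(\<Sum>t\<in>S. mu \<nu> t k0) \<le> exp_max K T \<nu> S"
proof -
  have "(\<Sum>t\<in>S. mu \<nu> t k0) = (\<Sum>t\<in>S. \<integral>x. x t k0 \<partial>omega T \<nu>)"
    using coord_int(2)[OF \<nu> _ k0] S by (intro sum.cong) auto
  also have "\<dots> = (\<integral>x. (\<Sum>t\<in>S. x t k0) \<partial>omega T \<nu>)"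
    using coord_int(1)[OF \<nu> _ k0] S by (intro Bochner_Integration.integral_sum[symmetric]) auto
  also have "\<dots> \<le> exp_max K T \<nu> S" unfolding exp_max_def
  proof (rule integral_mono)
    show "integrable (omega T \<nu>) (\<lambda>x. \<Sum>t\<in>S. x t k0)"
      using coord_int(1)[OF \<nu> _ k0] S by (intro Bochner_Integration.integrable_sum) auto
    show "integrable (omega T \<nu>) (\<lambda>x. Max ((\<lambda>k. \<Sum>t\<in>S. x t k) ` {1..K}))"
      using k0 by (intro integrable_max_reward[OF \<nu> _ S]) auto
    fix x show "(\<Sum>t\<in>S. x t k0) \<le> Max ((\<lambda>k. \<Sum>t\<in>S. x t k) ` {1..K})"
      using k0 by (intro Max_ge) auto
  qed
  finally show ?thesis .
qed

subsection \<open>Batches\<close>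

definition batch_index :: "nat \<Rightarrow> nat \<Rightarrow> nat" where
  "batch_index \<Delta> t = (t - 1) div \<Delta> + 1"

lemma batch_eq:
  assumes "\<Delta> \<ge> 1" "j \<ge> 1"
  shows "batch \<Delta> T j = {t \<in> {1..T}. batch_index \<Delta> t = j}"
proof (intro set_eqI iffI)
  fix t assume t: "t \<in> batch \<Delta> T j"
  then have t1: "(j - 1) * \<Delta> + 1 \<le> t" "t \<le> j * \<Delta>" "t \<le> T" by (auto simp: batch_def)
  have a1: "\<Delta> * (j - 1) \<le> t - 1" using t1 by (simp add: mult.commute)
  have "j * \<Delta> = (j - 1) * \<Delta> + \<Delta>" using assms by (cases j) auto
  then have a2: "t - 1 < \<Delta> * Suc (j - 1)" using t1 assms by (simp add: mult.commute)
  have "(t - 1) div \<Delta> = j - 1" using div_nat_eqI[OF a1 a2] .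
  then show "t \<in> {t \<in> {1..T}. batch_index \<Delta> t = j}" using t1 assms by (auto simp: batch_index_def)
next
  fix t assume t: "t \<in> {t \<in> {1..T}. batch_index \<Delta> t = j}"
  then have q: "(t - 1) div \<Delta> = j - 1" and t1: "1 \<le> t" "t \<le> T"
    using assms by (auto simp: batch_index_def)
  have "(j - 1) * \<Delta> \<le> t - 1" by (metis q div_times_less_eq_dividend)
  then have b1: "(j - 1) * \<Delta> + 1 \<le> t" using t1 by linarith
  have "t - 1 < \<Delta> + ((t - 1) div \<Delta>) * \<Delta>" using assms by (intro dividend_less_div_times) simp
  then have "t - 1 < \<Delta> + \<Delta> * (j - 1)" using q by (simp add: mult.commute)
  moreover have "\<Delta> + \<Delta> * (j - 1) = j * \<Delta>" using assms by (cases j) (auto simp: algebra_simps)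
  ultimately have b2: "t \<le> j * \<Delta>" using t1 by simp
  show "t \<in> batch \<Delta> T j" using b1 b2 t1 by (auto simp: batch_def)
qed

lemma batch_index_range:
  assumes "\<Delta> \<ge> 1" "t \<in> {1..T}"
  shows "batch_index \<Delta> t \<in> {1..nat \<lceil>real T / real \<Delta>\<rceil>}"
proof -
  define q where "q = (t - 1) div \<Delta>"
  have "q * \<Delta> \<le> t - 1" unfolding q_def by simp
  then have "real q * real \<Delta> \<le> real (t - 1)" by (metis of_nat_le_iff of_nat_mult)
  also have "\<dots> < real T" using assms by simp
  finally have "real q < real T / real \<Delta>" using assms by (simp add: field_simps)
  then have "int q < \<lceil>real T / real \<Delta>\<rceil>" by (simp add: less_ceiling_iff)
  then have "q < nat \<lceil>real T / real \<Delta>\<rceil>" by linarith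
  then show ?thesis unfolding batch_index_def q_def[symmetric] by simp
qed

lemma sum_batches:
  fixes f :: "nat \<Rightarrow> 'a :: comm_monoid_add"
  assumes "\<Delta> \<ge> 1"
  shows "(\<Sum>t\<in>{1..T}. f t) = (\<Sum>j\<in>{1..nat \<lceil>real T / real \<Delta>\<rceil>}. \<Sum>t\<in>batch \<Delta> T j. f t)"
proof -
  have "(\<Sum>j\<in>{1..nat \<lceil>real T / real \<Delta>\<rceil>}. \<Sum>t\<in>batch \<Delta> T j. f t) =
        (\<Sum>j\<in>{1..nat \<lceil>real T / real \<Delta>\<rceil>}. \<Sum>t\<in>{t \<in> {1..T}. batch_index \<Delta> t = j}. f t)"
    using batch_eq[OF assms] by (intro sum.cong) auto
  also have "\<dots> = (\<Sum>t\<in>{1..T}. f t)"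
    using batch_index_range[OF assms] by (intro sum.group) auto
  finally show ?thesis by simp
qed

lemma batch_sub: "batch \<Delta> T j \<subseteq> {1..T}"
  unfolding batch_def by auto

lemma card_batch: "card (batch \<Delta> T j) \<le> \<Delta>"
proof -
  have "batch \<Delta> T j \<subseteq> {(j - 1) * \<Delta> + 1..j * \<Delta>}" unfolding batch_def by auto
  then have "card (batch \<Delta> T j) \<le> card {(j - 1) * \<Delta> + 1..j * \<Delta>}" by (intro card_mono) auto
  also have "\<dots> \<le> \<Delta>" by (cases j) (auto simp: algebra_simps)
  finally show ?thesis .
qed

subsection \<open>From the static to the dynamic benchmark\<close>

definition mean_shift :: "nat \<Rightarrow> (nat \<Rightarrow> (nat \<Rightarrow> real) measure) \<Rightarrow> nat \<Rightarrow> real" where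
  "mean_shift K \<nu> s = Max ((\<lambda>k. \<bar>mu \<nu> s k - mu \<nu> (s + 1) k\<bar>) ` {1..K})"

definition batch_variation :: "nat \<Rightarrow> nat \<Rightarrow> nat \<Rightarrow> (nat \<Rightarrow> (nat \<Rightarrow> real) measure) \<Rightarrow> nat \<Rightarrow> real" where
  "batch_variation K T \<Delta> \<nu> j = (\<Sum>s\<in>{s \<in> {1..T - 1}. batch_index \<Delta> s = j}. mean_shift K \<nu> s)"

lemma mean_shift_ge:
  assumes "k \<in> {1..K}"
  shows "\<bar>mu \<nu> s k - mu \<nu> (s + 1) k\<bar> \<le> mean_shift K \<nu> s"
  unfolding mean_shift_def using assms by (intro Max_ge) auto

lemma mean_shift_nonneg: "K \<ge> 1 \<Longrightarrow> 0 \<le> mean_shift K \<nu> s"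
  using mean_shift_ge[of 1 K \<nu> s] by (meson abs_ge_zero atLeastAtMost_iff le_refl order_trans)

lemma batch_variation_nonneg: "K \<ge> 1 \<Longrightarrow> 0 \<le> batch_variation K T \<Delta> \<nu> j"
  unfolding batch_variation_def using mean_shift_nonneg by (intro sum_nonneg) auto

lemma mean_drift_le:
  assumes k: "k \<in> {1..K}" and t: "t0 \<le> t"
  shows "\<bar>mu \<nu> t k - mu \<nu> t0 k\<bar> \<le> (\<Sum>s\<in>{t0..<t}. mean_shift K \<nu> s)"
  using t
proof (induction t rule: nat_induct_at_least)
  case base then show ?case by simp
next
  case (Suc n)
  have "\<bar>mu \<nu> (Suc n) k - mu \<nu> t0 k\<bar> \<le> \<bar>mu \<nu> n k - mu \<nu> t0 k\<bar> + \<bar>mu \<nu> n k - mu \<nu> (n + 1) k\<bar>"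
    by simp
  also have "\<dots> \<le> (\<Sum>s\<in>{t0..<n}. mean_shift K \<nu> s) + mean_shift K \<nu> n"
    using Suc.IH mean_shift_ge[OF k] by (intro add_mono) auto
  also have "\<dots> = (\<Sum>s\<in>{t0..<Suc n}. mean_shift K \<nu> s)" using Suc.hyps by simp
  finally show ?case .
qed

lemma sum_batch_variation:
  assumes \<nu>: "\<nu> \<in> envs K T VT" and D: "\<Delta> \<ge> 1"
  shows "(\<Sum>j\<in>{1..nat \<lceil>real T / real \<Delta>\<rceil>}. batch_variation K T \<Delta> \<nu> j) \<le> VT"
proof -
  have "(\<Sum>j\<in>{1..nat \<lceil>real T / real \<Delta>\<rceil>}. batch_variation K T \<Delta> \<nu> j) = (\<Sum>s\<in>{1..T - 1}. mean_shift K \<nu> s)"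
    unfolding batch_variation_def using batch_index_range[OF D, of _ T] by (intro sum.group) auto
  also have "\<dots> \<le> VT" using \<nu> unfolding envs_def Vset_def mean_shift_def by auto
  finally show ?thesis .
qed

lemma batch_mean_drift:
  assumes K: "K \<ge> 1" and D: "\<Delta> \<ge> 1" and j: "j \<ge> 1"
    and t: "t \<in> batch \<Delta> T j" and k: "k \<in> {1..K}"
  shows "\<bar>mu \<nu> t k - mu \<nu> ((j - 1) * \<Delta> + 1) k\<bar> \<le> batch_variation K T \<Delta> \<nu> j"
proof -
  let ?t0 = "(j - 1) * \<Delta> + 1"
  have "{?t0..<t} \<subseteq> {s \<in> {1..T - 1}. batch_index \<Delta> s = j}"
  proof
    fix s assume s: "s \<in> {?t0..<t}"
    then have "s \<in> batch \<Delta> T j" using t unfolding batch_def by auto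
    moreover have "s < T" using s t batch_sub[of \<Delta> T j] by auto
    ultimately show "s \<in> {s \<in> {1..T - 1}. batch_index \<Delta> s = j}"
      unfolding batch_eq[OF D j] by auto
  qed
  then have "(\<Sum>s\<in>{?t0..<t}. mean_shift K \<nu> s) \<le> batch_variation K T \<Delta> \<nu> j"
    unfolding batch_variation_def using mean_shift_nonneg[OF K] by (intro sum_mono2) auto
  moreover have "?t0 \<le> t" using t unfolding batch_def by auto
  ultimately show ?thesis using mean_drift_le[OF k, of ?t0 t \<nu>] by linarith
qed

text \<open>Within a batch, every epoch's best mean is within 2 V_j of the mean of the arm that is
  best at the first epoch of the batch; as the static benchmark dominates that arm, the
  dynamic benchmark exceeds the static one by at most 2 Delta V_j.\<close>

lemma dynamic_minus_static_le:
  assumes \<nu>: "\<nu> \<in> envs K T VT" and K: "K \<ge> 1" and D: "\<Delta> \<ge> 1" and j: "j \<ge> 1"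
  shows "(\<Sum>t\<in>batch \<Delta> T j. mustar K \<nu> t) - exp_max K T \<nu> (batch \<Delta> T j)
           \<le> 2 * real \<Delta> * batch_variation K T \<Delta> \<nu> j"
proof -
  define t0 where "t0 = (j - 1) * \<Delta> + 1"
  define V where "V = batch_variation K T \<Delta> \<nu> j"
  obtain k0 where k0: "k0 \<in> {1..K}" and mk0: "mustar K \<nu> t0 = mu \<nu> t0 k0"
    using Max_in[of "(\<lambda>k. mu \<nu> t0 k) ` {1..K}"] K unfolding mustar_def by fastforce
  have drift: "\<bar>mu \<nu> t k - mu \<nu> t0 k\<bar> \<le> V" if "t \<in> batch \<Delta> T j" "k \<in> {1..K}" for t k
    using batch_mean_drift[OF K D j that] unfolding t0_def V_def .
  have gap: "mustar K \<nu> t - mu \<nu> t k0 \<le> 2 * V" if t: "t \<in> batch \<Delta> T j" for t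
  proof -
    obtain k1 where k1: "k1 \<in> {1..K}" and mk1: "mustar K \<nu> t = mu \<nu> t k1"
      using Max_in[of "(\<lambda>k. mu \<nu> t k) ` {1..K}"] K unfolding mustar_def by fastforce
    have "mu \<nu> t0 k1 \<le> mustar K \<nu> t0" unfolding mustar_def using k1 by (intro Max_ge) auto
    then show ?thesis using drift[OF t k1] drift[OF t k0] mk0 mk1 by linarith
  qed
  have "(\<Sum>t\<in>batch \<Delta> T j. mustar K \<nu> t) - exp_max K T \<nu> (batch \<Delta> T j)
      \<le> (\<Sum>t\<in>batch \<Delta> T j. mustar K \<nu> t - mu \<nu> t k0)"
    using exp_max_ge[OF \<nu> batch_sub k0] by (simp add: sum_subtractf)
  also have "\<dots> \<le> (\<Sum>t\<in>batch \<Delta> T j. 2 * V)" using gap by (rule sum_mono)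
  also have "\<dots> = real (card (batch \<Delta> T j)) * (2 * V)" by simp
  also have "\<dots> \<le> real \<Delta> * (2 * V)"
    using card_batch batch_variation_nonneg[OF K] unfolding V_def by (intro mult_right_mono) auto
  finally show ?thesis unfolding V_def by simp
qed

lemma pol_reward_batches:
  assumes \<nu>: "\<nu> \<in> envs K T VT" and v: "valid_policy K \<pi>" and pm: "policy_measurable T \<pi> \<nu>"
    and D: "\<Delta> \<ge> 1"
  shows "pol_reward T \<pi> \<nu> {1..T} = (\<Sum>j\<in>{1..nat \<lceil>real T / real \<Delta>\<rceil>}. pol_reward T \<pi> \<nu> (batch \<Delta> T j))"
proof -
  let ?J = "{1..nat \<lceil>real T / real \<Delta>\<rceil>}"
  let ?R = "\<lambda>S x. \<Sum>bs\<in>arm_seqs K T. pmf (play \<pi> x T) bs * (\<Sum>t\<in>S. mu \<nu> t (bs ! (t - 1)))"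
  have R_eq: "pol_reward T \<pi> \<nu> S = (\<integral>x. ?R S x \<partial>omega T \<nu>)" for S
    unfolding pol_reward_def expectation_play[OF v] ..
  have "?R {1..T} x = (\<Sum>j\<in>?J. ?R (batch \<Delta> T j) x)" for x
  proof -
    have "?R {1..T} x = (\<Sum>bs\<in>arm_seqs K T. \<Sum>j\<in>?J. pmf (play \<pi> x T) bs *
            (\<Sum>t\<in>batch \<Delta> T j. mu \<nu> t (bs ! (t - 1))))"
      by (subst sum_batches[OF D]) (simp add: sum_distrib_left)
    also have "\<dots> = (\<Sum>j\<in>?J. ?R (batch \<Delta> T j) x)" by (rule sum.swap)
    finally show ?thesis .
  qed
  then have "pol_reward T \<pi> \<nu> {1..T} = (\<integral>x. (\<Sum>j\<in>?J. ?R (batch \<Delta> T j) x) \<partial>omega T \<nu>)"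
    unfolding R_eq by simp
  also have "\<dots> = (\<Sum>j\<in>?J. pol_reward T \<pi> \<nu> (batch \<Delta> T j))"
    unfolding R_eq by (intro Bochner_Integration.integral_sum Bochner_Integration.integrable_sum
        integrable_pmf_play_const[OF \<nu> pm])
  finally show ?thesis .
qed

lemma regret_le_batch_bound:
  assumes K: "K \<ge> 1" and D: "\<Delta> \<ge> 1" and v: "valid_policy K \<pi>"
    and pm: "\<forall>\<nu>\<in>envs K T VT. policy_measurable T \<pi> \<nu>"
    and hyp: "\<forall>\<nu>\<in>envs K T VT. \<forall>j\<in>{1..nat \<lceil>real T / real \<Delta>\<rceil>}.
                 exp_max K T \<nu> (batch \<Delta> T j) - pol_reward T \<pi> \<nu> (batch \<Delta> T j) \<le> B"
  shows "regret K T VT \<pi> \<le> ereal (real_of_int \<lceil>real T / real \<Delta>\<rceil> * B + 2 * real \<Delta> * VT)"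
  unfolding regret_def
proof (rule SUP_least)
  fix \<nu> assume \<nu>: "\<nu> \<in> envs K T VT"
  let ?J = "{1..nat \<lceil>real T / real \<Delta>\<rceil>}"
  let ?V = "batch_variation K T \<Delta> \<nu>"
  have "(\<Sum>t = 1..T. mustar K \<nu> t) - pol_reward T \<pi> \<nu> {1..T}
      = (\<Sum>j\<in>?J. (\<Sum>t\<in>batch \<Delta> T j. mustar K \<nu> t) - pol_reward T \<pi> \<nu> (batch \<Delta> T j))"
    unfolding pol_reward_batches[OF \<nu> v pm[rule_format, OF \<nu>] D] sum_subtractf
      sum_batches[OF D, of "mustar K \<nu>"] ..
  also have "\<dots> \<le> (\<Sum>j\<in>?J. 2 * real \<Delta> * ?V j + B)"
  proof (rule sum_mono)
    fix j assume j: "j \<in> ?J"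
    then show "(\<Sum>t\<in>batch \<Delta> T j. mustar K \<nu> t) - pol_reward T \<pi> \<nu> (batch \<Delta> T j) \<le> 2 * real \<Delta> * ?V j + B"
      using dynamic_minus_static_le[OF \<nu> K D, of j] hyp \<nu> by fastforce
  qed
  also have "\<dots> = 2 * real \<Delta> * (\<Sum>j\<in>?J. ?V j) + real (nat \<lceil>real T / real \<Delta>\<rceil>) * B"
    by (simp add: sum.distrib sum_distrib_left)
  also have "\<dots> \<le> 2 * real \<Delta> * VT + real (nat \<lceil>real T / real \<Delta>\<rceil>) * B"
    using sum_batch_variation[OF \<nu> D] by (intro add_right_mono mult_left_mono) auto
  also have "real (nat \<lceil>real T / real \<Delta>\<rceil>) = real_of_int \<lceil>real T / real \<Delta>\<rceil>" by simp
  finally show "ereal ((\<Sum>t = 1..T. mustar K \<nu> t) - pol_reward T \<pi> \<nu> {1..T})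
      \<le> ereal (real_of_int \<lceil>real T / real \<Delta>\<rceil> * B + 2 * real \<Delta> * VT)" by simp
qed

subsection \<open>Exp3: weights, sampling probabilities and measurability\<close>

lemma exp3_weights_pos: "0 < exp3_weights K \<gamma> h k"
proof -
  have "0 < foldl (exp3_step K \<gamma>) w h k" if "\<forall>k. 0 < w k" for w
    using that
  proof (induction h arbitrary: w)
    case (Cons a h)
    have "\<forall>k. 0 < exp3_step K \<gamma> w a k" using Cons.prems
      by (auto simp: exp3_step_def split: prod.splits)
    then show ?case using Cons.IH by simp
  qed simp
  then show ?thesis unfolding exp3_weights_def by simp
qed

lemma exp3_prob_ge:
  assumes "\<forall>k. 0 < w k" "K \<ge> 1" "0 \<le> \<gamma>" "\<gamma> \<le> 1"
  shows "\<gamma> / real K \<le> exp3_prob K \<gamma> w k"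
proof -
  have "0 < (\<Sum>k'\<in>{1..K}. w k')" using assms by (intro sum_pos) auto
  then have "0 \<le> (1 - \<gamma>) * w k / (\<Sum>k'\<in>{1..K}. w k')" using assms
    by (intro divide_nonneg_pos mult_nonneg_nonneg) (auto simp: less_imp_le)
  then show ?thesis unfolding exp3_prob_def by simp
qed

lemma exp3_prob_pos:
  assumes "\<forall>k. 0 < w k" "K \<ge> 1" "0 < \<gamma>" "\<gamma> \<le> 1"
  shows "0 < exp3_prob K \<gamma> w k"
proof -
  have "0 < \<gamma> / real K" using assms by simp
  also have "\<dots> \<le> exp3_prob K \<gamma> w k" using assms by (intro exp3_prob_ge) auto
  finally show ?thesis .
qed

lemma exp3_prob_sum:
  assumes "\<forall>k. 0 < w k" "K \<ge> 1"
  shows "(\<Sum>k\<in>{1..K}. exp3_prob K \<gamma> w k) = 1"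
proof -
  have pos: "0 < (\<Sum>k'\<in>{1..K}. w k')" using assms by (intro sum_pos) auto
  have "(\<Sum>k\<in>{1..K}. exp3_prob K \<gamma> w k) =
        (1 - \<gamma>) * (\<Sum>k\<in>{1..K}. w k) / (\<Sum>k'\<in>{1..K}. w k') + real K * (\<gamma> / real K)"
    unfolding exp3_prob_def sum.distrib by (simp add: sum_divide_distrib[symmetric] sum_distrib_left)
  also have "\<dots> = 1" using pos assms by (simp add: field_simps)
  finally show ?thesis .
qed

lemma pmf_exp3_restart:
  assumes "K \<ge> 1" "0 \<le> \<gamma>" "\<gamma> \<le> 1"
  shows "pmf (exp3_restart K \<Delta> \<gamma> t h) k = (if k \<in> {1..K}
           then exp3_prob K \<gamma> (exp3_weights K \<gamma> (drop (((t - 1) div \<Delta>) * \<Delta>) h)) k else 0)"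
proof -
  define f where "f k = (if k \<in> {1..K}
           then exp3_prob K \<gamma> (exp3_weights K \<gamma> (drop (((t - 1) div \<Delta>) * \<Delta>) h)) k else 0)" for k
  have nn: "0 \<le> f k" for k
  proof -
    have "0 \<le> \<gamma> / real K" using assms by simp
    also have "\<dots> \<le> exp3_prob K \<gamma> (exp3_weights K \<gamma> (drop (((t - 1) div \<Delta>) * \<Delta>) h)) k"
      using exp3_weights_pos assms by (intro exp3_prob_ge) auto
    finally show ?thesis unfolding f_def by simp
  qed
  have "(\<integral>\<^sup>+x. ennreal (f x) \<partial>count_space UNIV) = (\<integral>\<^sup>+x. ennreal (f x) * indicator {1..K} x \<partial>count_space UNIV)"
    by (intro nn_integral_cong) (auto simp: f_def split: split_indicator)
  also have "\<dots> = (\<Sum>x\<in>{1..K}. ennreal (f x))"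
    by (simp add: nn_integral_count_space_indicator[symmetric] nn_integral_count_space_finite)
  also have "\<dots> = ennreal (\<Sum>x\<in>{1..K}. f x)" using nn by (simp add: sum_ennreal)
  also have "(\<Sum>x\<in>{1..K}. f x) = 1" unfolding f_def
    using exp3_prob_sum[OF _ assms(1)] exp3_weights_pos by simp
  finally have "(\<integral>\<^sup>+x. ennreal (f x) \<partial>count_space UNIV) = 1" by simp
  then show ?thesis unfolding exp3_restart_def f_def[symmetric]
    using pmf_embed_pmf[of f] nn by simp
qed

lemma valid_exp3:
  assumes "K \<ge> 1" "0 \<le> \<gamma>" "\<gamma> \<le> 1"
  shows "valid_policy K (exp3_restart K \<Delta> \<gamma>)"
  unfolding valid_policy_def
proof (intro allI subsetI)
  fix t h k assume "k \<in> set_pmf (exp3_restart K \<Delta> \<gamma> t h)"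
  then have "pmf (exp3_restart K \<Delta> \<gamma> t h) k \<noteq> 0" by (simp add: set_pmf_eq)
  then show "k \<in> {1..K}" unfolding pmf_exp3_restart[OF assms] by (auto split: if_splits)
qed

lemma policy_measurableI:
  assumes "\<And>t cs a. (\<lambda>x. pmf (\<pi> t (hist x cs)) a) \<in> borel_measurable (omega T \<nu>)"
  shows "policy_measurable T \<pi> \<nu>"
  unfolding policy_measurable_def
proof (intro allI)
  fix n as show "(\<lambda>x. pmf (play \<pi> x n) as) \<in> borel_measurable (omega T \<nu>)"
  proof (induction n arbitrary: as)
    case 0
    then show ?case by (simp add: pmf_return)
  next
    case (Suc n)
    show ?case unfolding pmf_play_Suc using Suc.IH assms by (cases "as = []") auto
  qed
qed

lemma exp3_weights_measurable:
  assumes X: "\<And>s a. (\<lambda>x. x s a) \<in> borel_measurable M"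
  shows "(\<lambda>x. exp3_weights K \<gamma> (map (\<lambda>(s, a). (a, x s a)) L) k) \<in> borel_measurable M"
proof (induction L arbitrary: k rule: rev_induct)
  case Nil
  then show ?case by (simp add: exp3_weights_def)
next
  case (snoc p L)
  obtain s a where p: "p = (s, a)" by force
  define W where "W x = exp3_weights K \<gamma> (map (\<lambda>(s, a). (a, x s a)) L)" for x
  have IH: "(\<lambda>x. W x k) \<in> borel_measurable M" for k unfolding W_def by (rule snoc.IH)
  have eq: "(\<lambda>x. exp3_weights K \<gamma> (map (\<lambda>(s, a). (a, x s a)) (L @ [p])) k) = (\<lambda>x.
     (if k = a then W x a * exp (\<gamma> * (x s a / ((1 - \<gamma>) * W x a / (\<Sum>k'\<in>{1..K}. W x k') + \<gamma> / real K)) / real K)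
      else W x k))"
    unfolding W_def exp3_weights_def p by (intro ext) (simp add: exp3_step_def exp3_prob_def)
  have "(\<lambda>x. \<Sum>k'\<in>{1..K}. W x k') \<in> borel_measurable M" using IH by (intro borel_measurable_sum) auto
  then have "(\<lambda>x. W x a * exp (\<gamma> * (x s a / ((1 - \<gamma>) * W x a / (\<Sum>k'\<in>{1..K}. W x k') + \<gamma> / real K)) / real K))
        \<in> borel_measurable M"
    using IH X by measurable
  then show ?case unfolding eq using IH by (cases "k = a") auto
qed

lemma exp3_measurable:
  assumes \<nu>: "\<nu> \<in> envs K T VT" and K: "K \<ge> 1" and g: "0 \<le> \<gamma>" "\<gamma> \<le> 1"
  shows "policy_measurable T (exp3_restart K \<Delta> \<gamma>) \<nu>"
proof (rule policy_measurableI)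
  fix t cs a
  let ?M = "omega T \<nu>"
  define d where "d = (t - 1) div \<Delta> * \<Delta>"
  have W: "(\<lambda>x. exp3_weights K \<gamma> (drop d (hist x cs)) k) \<in> borel_measurable ?M" for k
    unfolding hist_def drop_map by (rule exp3_weights_measurable[OF coord_meas[OF \<nu>]])
  have "(\<lambda>x. \<Sum>k'\<in>{1..K}. exp3_weights K \<gamma> (drop d (hist x cs)) k') \<in> borel_measurable ?M"
    using W by (intro borel_measurable_sum) auto
  then have "(\<lambda>x. (1 - \<gamma>) * exp3_weights K \<gamma> (drop d (hist x cs)) a /
      (\<Sum>k'\<in>{1..K}. exp3_weights K \<gamma> (drop d (hist x cs)) k') + \<gamma> / real K) \<in> borel_measurable ?M"
    using W by measurable
  then show "(\<lambda>x. pmf (exp3_restart K \<Delta> \<gamma> t (hist x cs)) a) \<in> borel_measurable ?M"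
    unfolding pmf_exp3_restart[OF K g] d_def[symmetric] exp3_prob_def by (cases "a \<in> {1..K}") auto
qed

subsection \<open>Exp3: the one-step growth of the total weight\<close>

text \<open>On [0,1] the exponential is below its quadratic Taylor polynomial with the
  remainder coefficient e - 2 (the value of the tail of the exponential series at 1).\<close>

lemma exp_le_quad:
  fixes z :: real assumes "0 \<le> z" "z \<le> 1"
  shows "exp z \<le> 1 + z + (exp 1 - 2) * z\<^sup>2"
proof -
  have s1: "summable (\<lambda>n. inverse (fact (n + 2)) * z ^ (n + 2))"
    by (rule summable_exp [THEN summable_ignore_initial_segment])
  have s2: "summable (\<lambda>n. inverse (fact (n + 2)) * (1::real) ^ (n + 2))"
    by (rule summable_exp [THEN summable_ignore_initial_segment])
  have "(\<Sum>n. inverse (fact (n + 2)) * z ^ (n + 2)) \<le>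
        (\<Sum>n. z\<^sup>2 * (inverse (fact (n + 2)) * (1::real) ^ (n + 2)))"
  proof (rule suminf_le)
    fix n
    have "z ^ (n + 2) = z^n * z\<^sup>2" by (simp add: power_add power2_eq_square)
    also have "\<dots> \<le> 1 * z\<^sup>2" using assms by (intro mult_right_mono power_le_one) auto
    finally show "inverse (fact (n + 2)) * z ^ (n + 2) \<le> z\<^sup>2 * (inverse (fact (n + 2)) * (1::real) ^ (n + 2))"
      by (simp add: mult_left_mono)
  qed (use s1 s2 summable_mult in auto)
  also have "\<dots> = z\<^sup>2 * (\<Sum>n. inverse (fact (n + 2)) * (1::real) ^ (n + 2))"
    using s2 by (rule suminf_mult)
  also have "(\<Sum>n. inverse (fact (n + 2)) * (1::real) ^ (n + 2)) = exp 1 - 2"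
    using exp_first_two_terms[of "1::real"] by simp
  finally show ?thesis using exp_first_two_terms[of z] by (simp add: mult.commute)
qed

lemma e_minus_2_nonneg: "0 \<le> exp 1 - (2::real)"
  using exp_ge_add_one_self[of "1::real"] by simp

lemma sum_upd:
  fixes w :: "'a \<Rightarrow> 'b :: ab_group_add"
  assumes "finite A" "a \<in> A"
  shows "(\<Sum>k\<in>A. (w(a := v)) k) = (\<Sum>k\<in>A. w k) - w a + v"
proof -
  have "(\<Sum>k\<in>A. (w(a := v)) k) = v + (\<Sum>k\<in>A - {a}. w k)"
    using assms by (simp add: sum.remove)
  also have "(\<Sum>k\<in>A - {a}. w k) = (\<Sum>k\<in>A. w k) - w a"
    using sum.remove[OF assms, of w] by simp
  finally show ?thesis by (simp add: algebra_simps)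
qed

text \<open>The coefficients of the linear and of the inverse-probability term in the growth
  bound of the Exp3 potential.\<close>

definition coef_lin :: "nat \<Rightarrow> real \<Rightarrow> real" where
  "coef_lin K \<gamma> = (\<gamma> / real K) / (1 - \<gamma>)"

definition coef_quad :: "nat \<Rightarrow> real \<Rightarrow> real" where
  "coef_quad K \<gamma> = (exp 1 - 2) * (\<gamma> / real K)\<^sup>2 / (1 - \<gamma>)"

lemma exp3_weight_share:
  assumes g: "0 < \<gamma>" "\<gamma> < 1" and K: "K \<ge> 1" and w: "\<forall>k. 0 < w k"
  shows "w a \<le> (\<Sum>k\<in>{1..K}. w k) * exp3_prob K \<gamma> w a / (1 - \<gamma>)"
proof -
  define S where "S = (\<Sum>k\<in>{1..K}. w k)"
  have Spos: "0 < S" unfolding S_def using w K by (intro sum_pos) auto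
  have "S * exp3_prob K \<gamma> w a = (1 - \<gamma>) * w a + S * (\<gamma> / real K)"
    unfolding exp3_prob_def S_def[symmetric] using Spos by (simp add: field_simps)
  moreover have "0 \<le> S * (\<gamma> / real K)" using Spos g by simp
  ultimately have "(1 - \<gamma>) * w a \<le> S * exp3_prob K \<gamma> w a" by linarith
  then show ?thesis unfolding S_def[symmetric] using g by (simp add: field_simps)
qed

lemma exp3_step_potential:
  assumes g: "0 < \<gamma>" "\<gamma> < 1" and K: "K \<ge> 1" and w: "\<forall>k. 0 < w k" and a: "a \<in> {1..K}"
    and r: "0 \<le> r" "r \<le> 1"
  defines "p \<equiv> exp3_prob K \<gamma> w a"
  shows "(\<Sum>k\<in>{1..K}. exp3_step K \<gamma> w (a, r) k) \<le>
         (\<Sum>k\<in>{1..K}. w k) * (1 + coef_lin K \<gamma> * r + coef_quad K \<gamma> * r / p)"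
proof -
  define S where "S = (\<Sum>k\<in>{1..K}. w k)"
  define u where "u = \<gamma> / real K"
  define z where "z = u * r / p"
  have Spos: "0 < S" unfolding S_def using w K by (intro sum_pos) auto
  have u: "0 < u" "u \<le> p" unfolding u_def p_def using g K exp3_prob_ge[OF w K] by auto
  have ppos: "0 < p" using u by linarith
  have "u * r \<le> p * 1" using u r by (intro mult_mono) auto
  then have z: "0 \<le> z" "z \<le> 1" unfolding z_def using u r ppos by (auto simp: field_simps)
  have sum_after: "(\<Sum>k\<in>{1..K}. exp3_step K \<gamma> w (a, r) k) = S + w a * (exp z - 1)"
  proof -
    have "exp3_step K \<gamma> w (a, r) = w(a := w a * exp z)"
      unfolding exp3_step_def z_def p_def u_def by (simp add: field_simps)
    then show ?thesis unfolding S_def using a by (simp add: sum_upd algebra_simps del: fun_upd_apply)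
  qed
  have wa: "w a \<le> S * p / (1 - \<gamma>)"
    unfolding S_def p_def using exp3_weight_share[OF g K w] .
  have pz: "p * z = u * r" and pzz: "p * z\<^sup>2 \<le> u\<^sup>2 * r / p"
  proof -
    show "p * z = u * r" unfolding z_def using ppos by simp
    have "r * r * (u * u) \<le> r * (u * u)" using r by (intro mult_right_mono) (auto simp: mult_left_le)
    then show "p * z\<^sup>2 \<le> u\<^sup>2 * r / p" unfolding z_def using ppos
      by (simp add: power2_eq_square field_simps)
  qed
  have "w a * (exp z - 1) \<le> S * p / (1 - \<gamma>) * (z + (exp 1 - 2) * z\<^sup>2)"
    using exp_le_quad[OF z] wa w z e_minus_2_nonneg Spos ppos g
    by (intro mult_mono) (auto simp: less_imp_le)
  also have "\<dots> = S / (1 - \<gamma>) * (p * z + (exp 1 - 2) * (p * z\<^sup>2))"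
    by (simp add: field_simps)
  also have "\<dots> \<le> S / (1 - \<gamma>) * (u * r + (exp 1 - 2) * (u\<^sup>2 * r / p))"
    unfolding pz using pzz Spos g e_minus_2_nonneg by (intro mult_left_mono add_left_mono) auto
  also have "\<dots> = S * (coef_lin K \<gamma> * r + coef_quad K \<gamma> * r / p)"
  proof -
    have "S / d * (u * r + E * (u\<^sup>2 * r / p)) = S * (u / d * r + E * u\<^sup>2 / d * r / p)"
      for d E :: real by (simp add: algebra_simps)
    then show ?thesis unfolding coef_lin_def coef_quad_def u_def .
  qed
  finally show ?thesis unfolding sum_after S_def[symmetric] by (simp add: algebra_simps)
qed

subsection \<open>Exp3 along a fixed arm path\<close>

text \<open>For a fixed reward table x and arm sequence cs: the weights of Exp3 restarted after
  epoch s0, and the probability with which the arm of epoch t was drawn.\<close>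

definition bweights :: "nat \<Rightarrow> real \<Rightarrow> nat \<Rightarrow> (nat \<Rightarrow> nat \<Rightarrow> real) \<Rightarrow> nat list \<Rightarrow> nat \<Rightarrow> real" where
  "bweights K \<gamma> s0 x cs = exp3_weights K \<gamma> (drop s0 (hist x cs))"

definition bprob :: "nat \<Rightarrow> real \<Rightarrow> nat \<Rightarrow> (nat \<Rightarrow> nat \<Rightarrow> real) \<Rightarrow> nat list \<Rightarrow> nat \<Rightarrow> real" where
  "bprob K \<gamma> s0 x cs t = exp3_prob K \<gamma> (bweights K \<gamma> s0 x (take (t - 1) cs)) (cs ! (t - 1))"

lemma bweights_pos: "0 < bweights K \<gamma> s0 x cs k"
  unfolding bweights_def by (rule exp3_weights_pos)

lemma bweights_snoc:
  assumes "s0 \<le> length as"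
  shows "bweights K \<gamma> s0 x (as @ [a]) = exp3_step K \<gamma> (bweights K \<gamma> s0 x as) (a, x (Suc (length as)) a)"
  using assms unfolding bweights_def exp3_weights_def by (simp add: hist_snoc)

lemma bprob_take:
  assumes "1 \<le> t" "t \<le> e" "e \<le> length bs"
  shows "bprob K \<gamma> s0 x (take e bs) t = bprob K \<gamma> s0 x bs t"
proof -
  have "t - 1 < e" using assms by linarith
  then show ?thesis using assms unfolding bprob_def by (simp add: min_def)
qed

lemma sum_epochs_snoc:
  assumes "length as = s0 + m"
  shows "(\<Sum>t\<in>{s0+1..s0 + Suc m}. F t ((as @ [a]) ! (t - 1)) (bprob K \<gamma> s0 x (as @ [a]) t)) =
         (\<Sum>t\<in>{s0+1..s0 + m}. F t (as ! (t - 1)) (bprob K \<gamma> s0 x as t))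
         + F (Suc (s0 + m)) a (exp3_prob K \<gamma> (bweights K \<gamma> s0 x as) a)"
proof -
  have old: "(as @ [a]) ! (t - 1) = as ! (t - 1) \<and> bprob K \<gamma> s0 x (as @ [a]) t = bprob K \<gamma> s0 x as t"
    if "t \<in> {s0+1..s0 + m}" for t
    using that assms unfolding bprob_def by (auto simp: nth_append)
  have last: "bprob K \<gamma> s0 x (as @ [a]) (Suc (s0 + m)) = exp3_prob K \<gamma> (bweights K \<gamma> s0 x as) a"
    using assms unfolding bprob_def by (simp add: nth_append)
  have "(\<Sum>t\<in>{s0+1..s0 + m}. F t ((as @ [a]) ! (t - 1)) (bprob K \<gamma> s0 x (as @ [a]) t)) =
        (\<Sum>t\<in>{s0+1..s0 + m}. F t (as ! (t - 1)) (bprob K \<gamma> s0 x as t))"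
    using old by (intro sum.cong) auto
  moreover have "(as @ [a]) ! (Suc (s0 + m) - 1) = a" using assms by (simp add: nth_append)
  ultimately show ?thesis by (simp add: last)
qed

lemma bweights_closed_form:
  assumes "length cs = s0 + m"
  shows "bweights K \<gamma> s0 x cs j = exp (\<gamma> / real K *
           (\<Sum>t\<in>{s0+1..s0+m}. if cs ! (t - 1) = j then x t j / bprob K \<gamma> s0 x cs t else 0))"
  using assms
proof (induction m arbitrary: cs)
  case 0
  then show ?case unfolding bweights_def exp3_weights_def by simp
next
  case (Suc m)
  then obtain as a where cs: "cs = as @ [a]" and las: "length as = s0 + m"
    by (metis add_Suc_right length_Suc_conv_rev)
  show ?case
    unfolding cs sum_epochs_snoc[OF las, where F="\<lambda>t b p. if b = j then x t j / p else 0"]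
    using Suc.IH[OF las]
    by (auto simp: bweights_snoc las exp3_step_def distrib_left exp_add)
qed

lemma log_potential_bound:
  assumes g: "0 < \<gamma>" "\<gamma> < 1" and K: "K \<ge> 1"
    and x: "\<And>t k. t \<in> {s0+1..s0+m} \<Longrightarrow> k \<in> {1..K} \<Longrightarrow> 0 \<le> x t k \<and> x t k \<le> 1"
    and cs: "cs \<in> arm_seqs K (s0 + m)"
  shows "ln (\<Sum>k\<in>{1..K}. bweights K \<gamma> s0 x cs k) \<le> ln (real K) +
           (\<Sum>t\<in>{s0+1..s0+m}. coef_lin K \<gamma> * x t (cs ! (t - 1))
                                + coef_quad K \<gamma> * x t (cs ! (t - 1)) / bprob K \<gamma> s0 x cs t)"
  using x cs
proof (induction m arbitrary: cs)
  case 0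
  then have "length cs = s0" by (simp add: arm_seqs_def)
  then show ?case unfolding bweights_def exp3_weights_def by simp
next
  case (Suc m)
  from Suc.prems(2) obtain as a where cs: "cs = as @ [a]" and as: "as \<in> arm_seqs K (s0 + m)"
    and a: "a \<in> {1..K}"
    unfolding arm_seqs_Suc[of K "s0 + m", simplified add_Suc_right[symmetric]] by auto
  have las: "length as = s0 + m" using as by (simp add: arm_seqs_def)
  define W where "W = bweights K \<gamma> s0 x as"
  define r where "r = x (Suc (s0 + m)) a"
  define p where "p = exp3_prob K \<gamma> W a"
  have r: "0 \<le> r" "r \<le> 1" using Suc.prems(1)[of "Suc (s0 + m)" a] a unfolding r_def by auto
  have W: "\<forall>k. 0 < W k" unfolding W_def using bweights_pos by blast
  have ppos: "0 < p" unfolding p_def using exp3_prob_pos[OF W K] g by simp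
  define y where "y = coef_lin K \<gamma> * r + coef_quad K \<gamma> * r / p"
  have y: "0 \<le> y" unfolding y_def coef_lin_def coef_quad_def using g r ppos e_minus_2_nonneg by simp
  have Spos: "0 < (\<Sum>k\<in>{1..K}. W k)" using K W by (intro sum_pos) auto
  have "ln (\<Sum>k\<in>{1..K}. bweights K \<gamma> s0 x cs k) \<le> ln ((\<Sum>k\<in>{1..K}. W k) * (1 + y))"
  proof (rule ln_mono)
    show "0 < (\<Sum>k\<in>{1..K}. bweights K \<gamma> s0 x cs k)" using K bweights_pos by (intro sum_pos) auto
    show "(\<Sum>k\<in>{1..K}. bweights K \<gamma> s0 x cs k) \<le> (\<Sum>k\<in>{1..K}. W k) * (1 + y)"
      unfolding cs bweights_snoc[of s0 as, simplified las, OF le_add1] las W_def[symmetric] r_def[symmetric]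
      using exp3_step_potential[OF g K W a r] unfolding y_def p_def by (simp add: add.assoc)
  qed
  also have "\<dots> = ln (\<Sum>k\<in>{1..K}. W k) + ln (1 + y)" using Spos y by (simp add: ln_mult)
  also have "\<dots> \<le> ln (\<Sum>k\<in>{1..K}. W k) + y" using ln_add_one_self_le_self[OF y] by simp
  also have "\<dots> \<le> ln (real K) + (\<Sum>t\<in>{s0+1..s0+m}. coef_lin K \<gamma> * x t (as ! (t - 1))
                                + coef_quad K \<gamma> * x t (as ! (t - 1)) / bprob K \<gamma> s0 x as t) + y"
    using Suc.IH[OF _ as] Suc.prems(1) unfolding W_def by simp
  finally show ?case
    unfolding cs sum_epochs_snoc[OF las, where F="\<lambda>t b p. coef_lin K \<gamma> * x t b + coef_quad K \<gamma> * x t b / p"]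
    unfolding W_def[symmetric] p_def[symmetric] r_def[symmetric] y_def by (simp add: add.assoc)
qed

lemma restart_point:
  fixes \<Delta> s0 q t :: nat
  assumes "\<Delta> \<ge> 1" "s0 = q * \<Delta>" "s0 < t" "t \<le> s0 + \<Delta>"
  shows "(t - 1) div \<Delta> * \<Delta> = s0"
proof -
  have "\<Delta> * q \<le> t - 1" "t - 1 < \<Delta> * Suc q" using assms by (auto simp: algebra_simps)
  then have "(t - 1) div \<Delta> = q" by (rule div_nat_eqI)
  then show ?thesis using assms by simp
qed

lemma pmf_exp3_batch:
  assumes K: "K \<ge> 1" and g: "0 \<le> \<gamma>" "\<gamma> \<le> 1" and D: "\<Delta> \<ge> 1" "s0 = q * \<Delta>"
    and t: "s0 < t" "t \<le> s0 + \<Delta>" and cs: "length cs = t - 1"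
  shows "pmf (exp3_restart K \<Delta> \<gamma> t (hist x cs)) a =
           (if a \<in> {1..K} then exp3_prob K \<gamma> (bweights K \<gamma> s0 x cs) a else 0)"
  unfolding pmf_exp3_restart[OF K g] bweights_def restart_point[OF D t] ..

lemma expectation_epoch:
  assumes K: "K \<ge> 1" and g: "0 \<le> \<gamma>" "\<gamma> \<le> 1" and D: "\<Delta> \<ge> 1" "s0 = q * \<Delta>"
    and t: "s0 < t" "t \<le> s0 + \<Delta>" "t \<le> N"
  shows "(\<Sum>bs\<in>arm_seqs K N. pmf (play (exp3_restart K \<Delta> \<gamma>) x N) bs *
            G (bweights K \<gamma> s0 x (take (t - 1) bs)) (bs ! (t - 1))) =
         (\<Sum>as\<in>arm_seqs K (t - 1). pmf (play (exp3_restart K \<Delta> \<gamma>) x (t - 1)) as *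
            (\<Sum>a\<in>{1..K}. exp3_prob K \<gamma> (bweights K \<gamma> s0 x as) a * G (bweights K \<gamma> s0 x as) a))"
proof -
  let ?\<pi> = "exp3_restart K \<Delta> \<gamma>"
  define f where "f cs = G (bweights K \<gamma> s0 x (take (t - 1) cs)) (cs ! (t - 1))" for cs
  have tt: "Suc (t - 1) = t" using t by simp
  have "(\<Sum>bs\<in>arm_seqs K N. pmf (play ?\<pi> x N) bs * G (bweights K \<gamma> s0 x (take (t - 1) bs)) (bs ! (t - 1)))
      = (\<Sum>bs\<in>arm_seqs K N. pmf (play ?\<pi> x N) bs * f (take t bs))"
    using t by (intro sum.cong refl) (auto simp: f_def arm_seqs_def min_def)
  also have "\<dots> = (\<Sum>cs\<in>arm_seqs K t. pmf (play ?\<pi> x t) cs * f cs)"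
    by (rule sum_play_take[OF valid_exp3[OF K g] t(3)])
  also have "\<dots> = (\<Sum>as\<in>arm_seqs K (t - 1). pmf (play ?\<pi> x (t - 1)) as *
        (\<Sum>a\<in>{1..K}. pmf (?\<pi> t (hist x as)) a * f (as @ [a])))"
    using sum_play_Suc[where n="t - 1" and \<pi>="?\<pi>" and x=x and f=f and K=K] unfolding tt .
  also have "\<dots> = (\<Sum>as\<in>arm_seqs K (t - 1). pmf (play ?\<pi> x (t - 1)) as *
            (\<Sum>a\<in>{1..K}. exp3_prob K \<gamma> (bweights K \<gamma> s0 x as) a * G (bweights K \<gamma> s0 x as) a))"
    using pmf_exp3_batch[OF K g D t(1,2)]
    by (intro sum.cong refl arg_cong2[where f="(*)"]) (auto simp: f_def arm_seqs_def nth_append)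
  finally show ?thesis .
qed

text \<open>Importance weighting: dividing by the probability with which the played arm was
  drawn turns the expectation into a plain sum over all arms.  In particular the estimate
  [a_t = i] x_t^i / p_t of x_t^i is unbiased.\<close>

lemma expectation_inverse_prob:
  assumes K: "K \<ge> 1" and g: "0 < \<gamma>" "\<gamma> \<le> 1" and D: "\<Delta> \<ge> 1" "s0 = q * \<Delta>"
    and t: "s0 < t" "t \<le> s0 + \<Delta>" "t \<le> N"
  shows "(\<Sum>bs\<in>arm_seqs K N. pmf (play (exp3_restart K \<Delta> \<gamma>) x N) bs *
            (f (bs ! (t - 1)) / bprob K \<gamma> s0 x bs t)) = (\<Sum>a\<in>{1..K}. f a)"
proof -
  let ?\<pi> = "exp3_restart K \<Delta> \<gamma>"
  have p: "0 < exp3_prob K \<gamma> (bweights K \<gamma> s0 x as) a" for as a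
    using exp3_prob_pos[OF _ K g] bweights_pos by blast
  have "(\<Sum>bs\<in>arm_seqs K N. pmf (play ?\<pi> x N) bs * (f (bs ! (t - 1)) / bprob K \<gamma> s0 x bs t)) =
        (\<Sum>as\<in>arm_seqs K (t - 1). pmf (play ?\<pi> x (t - 1)) as *
            (\<Sum>a\<in>{1..K}. exp3_prob K \<gamma> (bweights K \<gamma> s0 x as) a * (f a / exp3_prob K \<gamma> (bweights K \<gamma> s0 x as) a)))"
    using expectation_epoch[where G="\<lambda>w a. f a / exp3_prob K \<gamma> w a", OF K _ g(2) D t] g
    unfolding bprob_def by simp
  also have "\<dots> = (\<Sum>as\<in>arm_seqs K (t - 1). pmf (play ?\<pi> x (t - 1)) as * (\<Sum>a\<in>{1..K}. f a))"
    using p by (simp add: less_imp_neq[symmetric])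
  also have "\<dots> = (\<Sum>a\<in>{1..K}. f a)"
    using sum_play_one[OF valid_exp3[OF K _ g(2)]] g by (simp add: sum_distrib_right[symmetric])
  finally show ?thesis .
qed

text \<open>Along every path the estimated total reward of any arm i is controlled by the
  potential: ln w_i \<le> ln (sum_k w_k).\<close>

lemma path_estimate_bound:
  assumes g: "0 < \<gamma>" "\<gamma> < 1" and K: "K \<ge> 1"
    and e: "s0 \<le> e" "e \<le> N" and bs: "bs \<in> arm_seqs K N" and i: "i \<in> {1..K}"
    and x: "\<And>t k. t \<in> {s0+1..e} \<Longrightarrow> k \<in> {1..K} \<Longrightarrow> 0 \<le> x t k \<and> x t k \<le> 1"
  shows "\<gamma> / real K * (\<Sum>t\<in>{s0+1..e}. if bs ! (t - 1) = i then x t i / bprob K \<gamma> s0 x bs t else 0)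
       \<le> ln (real K) + (\<Sum>t\<in>{s0+1..e}. coef_lin K \<gamma> * x t (bs ! (t - 1))
                                       + coef_quad K \<gamma> * x t (bs ! (t - 1)) / bprob K \<gamma> s0 x bs t)"
proof -
  let ?cs = "take e bs"
  have me: "s0 + (e - s0) = e" using e by simp
  have cs: "?cs \<in> arm_seqs K (s0 + (e - s0))"
    using bs e unfolding me by (auto simp: arm_seqs_def dest: in_set_takeD)
  have same: "bprob K \<gamma> s0 x ?cs t = bprob K \<gamma> s0 x bs t" "?cs ! (t - 1) = bs ! (t - 1)"
    if "t \<in> {s0+1..e}" for t
    using that e bs bprob_take[of t e bs] by (auto simp: arm_seqs_def)
  have "\<gamma> / real K * (\<Sum>t\<in>{s0+1..e}. if bs ! (t - 1) = i then x t i / bprob K \<gamma> s0 x bs t else 0)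
        = ln (bweights K \<gamma> s0 x ?cs i)"
  proof -
    have "(\<Sum>t\<in>{s0+1..e}. if bs ! (t - 1) = i then x t i / bprob K \<gamma> s0 x bs t else 0) =
          (\<Sum>t\<in>{s0+1..e}. if ?cs ! (t - 1) = i then x t i / bprob K \<gamma> s0 x ?cs t else 0)"
      using same by (intro sum.cong) auto
    moreover have "length ?cs = s0 + (e - s0)" using cs by (simp add: arm_seqs_def)
    ultimately show ?thesis using bweights_closed_form[of ?cs s0 "e - s0"] unfolding me by simp
  qed
  also have "\<dots> \<le> ln (\<Sum>k\<in>{1..K}. bweights K \<gamma> s0 x ?cs k)"
    using bweights_pos i by (intro ln_mono member_le_sum) (auto simp: less_imp_le)
  also have "\<dots> \<le> ln (real K) + (\<Sum>t\<in>{s0+1..e}. coef_lin K \<gamma> * x t (bs ! (t - 1))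
                                       + coef_quad K \<gamma> * x t (bs ! (t - 1)) / bprob K \<gamma> s0 x bs t)"
  proof -
    have "(\<Sum>t\<in>{s0+1..e}. coef_lin K \<gamma> * x t (?cs ! (t - 1))
                                + coef_quad K \<gamma> * x t (?cs ! (t - 1)) / bprob K \<gamma> s0 x ?cs t) =
          (\<Sum>t\<in>{s0+1..e}. coef_lin K \<gamma> * x t (bs ! (t - 1))
                                + coef_quad K \<gamma> * x t (bs ! (t - 1)) / bprob K \<gamma> s0 x bs t)"
      using same by (intro sum.cong) auto
    then show ?thesis using log_potential_bound[where x=x, OF g K _ cs] x unfolding me by simp
  qed
  finally show ?thesis .
qed

text \<open>Taking expectations in path_estimate_bound: the expected estimates are the true
  rewards, and the expected inverse-probability terms are the total rewards of all arms.\<close>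

lemma expected_potential_bound:
  assumes g: "0 < \<gamma>" "\<gamma> < 1" and K: "K \<ge> 1" and D: "\<Delta> \<ge> 1" "s0 = q * \<Delta>"
    and e: "s0 \<le> e" "e \<le> s0 + \<Delta>" "e \<le> N"
    and x: "\<And>t k. t \<in> {s0+1..e} \<Longrightarrow> k \<in> {1..K} \<Longrightarrow> 0 \<le> x t k \<and> x t k \<le> 1"
    and i: "i \<in> {1..K}"
  shows "\<gamma> / real K * (\<Sum>t\<in>{s0+1..e}. x t i) \<le> ln (real K)
     + coef_lin K \<gamma> * (\<Sum>bs\<in>arm_seqs K N. pmf (play (exp3_restart K \<Delta> \<gamma>) x N) bs *
                                         (\<Sum>t\<in>{s0+1..e}. x t (bs ! (t - 1))))
     + coef_quad K \<gamma> * (\<Sum>t\<in>{s0+1..e}. \<Sum>k\<in>{1..K}. x t k)"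
proof -
  let ?P = "\<lambda>bs. pmf (play (exp3_restart K \<Delta> \<gamma>) x N) bs"
  let ?p = "bprob K \<gamma> s0 x"
  let ?S = "{s0+1..e}"
  have if_0_div: "(if c then a / p else 0) = (if c then a else 0) / p" for c and a p :: real
    by simp
  have epoch: "s0 < t" "t \<le> s0 + \<Delta>" "t \<le> N" if "t \<in> ?S" for t using that e by auto
  have inv: "(\<Sum>bs\<in>arm_seqs K N. ?P bs * (f (bs ! (t - 1)) / ?p bs t)) = (\<Sum>a\<in>{1..K}. f a)"
    if "t \<in> ?S" for t f
    using expectation_inverse_prob[OF K g(1) _ D epoch[OF that]] g by simp
  have "\<gamma> / real K * (\<Sum>t\<in>?S. x t i) =
        \<gamma> / real K * (\<Sum>t\<in>?S. \<Sum>bs\<in>arm_seqs K N. ?P bs * (if bs ! (t - 1) = i then x t i / ?p bs t else 0))"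
  proof -
    have "(\<Sum>bs\<in>arm_seqs K N. ?P bs * (if bs ! (t - 1) = i then x t i / ?p bs t else 0)) = x t i"
      if "t \<in> ?S" for t
      unfolding if_0_div using inv[OF that, of "\<lambda>a. if a = i then x t i else 0"] i by simp
    then show ?thesis by simp
  qed
  also have "\<dots> = (\<Sum>bs\<in>arm_seqs K N. ?P bs *
                    (\<gamma> / real K * (\<Sum>t\<in>?S. if bs ! (t - 1) = i then x t i / ?p bs t else 0)))"
    by (simp only: sum_distrib_left mult.left_commute, rule sum.swap)
  also have "\<dots> \<le> (\<Sum>bs\<in>arm_seqs K N. ?P bs * (ln (real K) + (\<Sum>t\<in>?S. coef_lin K \<gamma> * x t (bs ! (t - 1))
                                                 + coef_quad K \<gamma> * x t (bs ! (t - 1)) / ?p bs t)))"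
    using path_estimate_bound[OF g K e(1,3) _ i x] by (intro sum_mono mult_left_mono) auto
  also have "\<dots> = ln (real K) * (\<Sum>bs\<in>arm_seqs K N. ?P bs)
     + coef_lin K \<gamma> * (\<Sum>bs\<in>arm_seqs K N. ?P bs * (\<Sum>t\<in>?S. x t (bs ! (t - 1))))
     + coef_quad K \<gamma> * (\<Sum>t\<in>?S. \<Sum>bs\<in>arm_seqs K N. ?P bs * (x t (bs ! (t - 1)) / ?p bs t))"
    by (simp add: distrib_left sum.distrib sum_distrib_left sum_distrib_right mult.commute
                  mult.left_commute) (rule sum.swap)
  also have "\<dots> = ln (real K) + coef_lin K \<gamma> * (\<Sum>bs\<in>arm_seqs K N. ?P bs * (\<Sum>t\<in>?S. x t (bs ! (t - 1))))
     + coef_quad K \<gamma> * (\<Sum>t\<in>?S. \<Sum>k\<in>{1..K}. x t k)"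
    using sum_play_one[OF valid_exp3[OF K]] g inv by simp
  finally show ?thesis .
qed

subsection \<open>Exp3: tuning gamma and the per-batch bound\<close>

lemma exp3_tradeoff:
  assumes g: "0 < \<gamma>" "\<gamma> < 1" and K: "K \<ge> 1" and M: "0 \<le> M"
    and bound: "\<gamma> / real K * M \<le> ln (real K) + coef_lin K \<gamma> * R + coef_quad K \<gamma> * (real K * M)"
  shows "M - R \<le> (exp 1 - 1) * \<gamma> * M + real K * ln (real K) / \<gamma>"
proof -
  have Kp: "0 < real K" using K by simp
  have lnK: "0 \<le> ln (real K)" using K by simp
  have "(1 - \<gamma>) * M = real K * (1 - \<gamma>) / \<gamma> * (\<gamma> / real K * M)" using g Kp by (simp add: field_simps)
  also have "\<dots> \<le> real K * (1 - \<gamma>) / \<gamma> * (ln (real K) + coef_lin K \<gamma> * R + coef_quad K \<gamma> * (real K * M))"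
    using bound g Kp by (intro mult_left_mono) auto
  also have "\<dots> = (1 - \<gamma>) * (real K * ln (real K)) / \<gamma> + R + (exp 1 - 2) * \<gamma> * M"
  proof -
    have "k * d / u * (L + (u / k) / d * R + E * (u / k)\<^sup>2 / d * (k * M)) = d * (k * L) / u + R + E * u * M"
      if "d \<noteq> 0" "u \<noteq> 0" "k \<noteq> 0" for k d u L E :: real
      using that by (simp add: field_simps power2_eq_square)
    then show ?thesis unfolding coef_lin_def coef_quad_def using g Kp by auto
  qed
  also have "(1 - \<gamma>) * (real K * ln (real K)) / \<gamma> \<le> real K * ln (real K) / \<gamma>"
    using g Kp lnK by (intro divide_right_mono) (auto simp: mult_left_le_one_le)
  finally show ?thesis by (simp add: algebra_simps)
qed

text \<open>The tuned value gamma = sqrt (A / (c D)) balances the two terms c gamma D + A / gamma.\<close>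

lemma balanced_gamma:
  fixes A c D :: real
  assumes "0 < A" "0 < c" "0 < D"
  defines "\<gamma> \<equiv> sqrt (A / (c * D))"
  shows "c * \<gamma> * D + A / \<gamma> = 2 * sqrt c * sqrt (D * A)"
proof -
  define s where "s = sqrt c"
  define d where "d = sqrt D"
  define a where "a = sqrt A"
  have pos: "0 < s" "0 < d" "0 < a" using assms unfolding s_def d_def a_def by auto
  have sq: "c = s * s" "D = d * d" "A = a * a" using assms unfolding s_def d_def a_def by auto
  have g: "\<gamma> = a / (s * d)" unfolding \<gamma>_def a_def s_def d_def
    by (simp add: real_sqrt_divide real_sqrt_mult)
  have "sqrt (D * A) = d * a" unfolding d_def a_def by (simp add: real_sqrt_mult)
  then show ?thesis unfolding g using pos unfolding sq s_def[symmetric] by (simp add: field_simps)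
qed

text \<open>When the tuned gamma would exceed 1, the bound exceeds the trivial bound D.\<close>

lemma trivial_regime:
  fixes A c D :: real
  assumes "1 \<le> c" "0 < D" "c * D \<le> A"
  shows "D \<le> 2 * sqrt c * sqrt (D * A)"
proof -
  have "D \<le> 2 * c * D" using assms by simp
  also have "2 * c * D = 2 * sqrt c * sqrt (D * (c * D))"
  proof -
    have "sqrt (D * (c * D)) = sqrt c * D" using assms by (simp add: real_sqrt_mult)
    moreover have "sqrt c * sqrt c = c" using assms by simp
    ultimately show ?thesis by (simp add: mult.assoc mult.left_commute)
  qed
  also have "\<dots> \<le> 2 * sqrt c * sqrt (D * A)"
    using assms by (intro mult_left_mono real_sqrt_le_mono) auto
  finally show ?thesis .
qed

lemma exp3_best_arm_bound:
  assumes g: "0 < \<gamma>" "\<gamma> < 1" and K: "K \<ge> 1" and D: "\<Delta> \<ge> 1" "s0 = q * \<Delta>"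
    and e: "s0 \<le> e" "e \<le> s0 + \<Delta>" "e \<le> N"
    and x: "\<And>t k. t \<in> {s0+1..e} \<Longrightarrow> k \<in> {1..K} \<Longrightarrow> 0 \<le> x t k \<and> x t k \<le> 1"
    and i: "i \<in> {1..K}"
    and best: "\<And>k. k \<in> {1..K} \<Longrightarrow> (\<Sum>t\<in>{s0+1..e}. x t k) \<le> (\<Sum>t\<in>{s0+1..e}. x t i)"
  shows "(\<Sum>t\<in>{s0+1..e}. x t i)
     - (\<Sum>bs\<in>arm_seqs K N. pmf (play (exp3_restart K \<Delta> \<gamma>) x N) bs * (\<Sum>t\<in>{s0+1..e}. x t (bs ! (t - 1))))
     \<le> (exp 1 - 1) * \<gamma> * real \<Delta> + real K * ln (real K) / \<gamma>"
proof -
  define G where "G k = (\<Sum>t\<in>{s0+1..e}. x t k)" for k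
  define R where "R = (\<Sum>bs\<in>arm_seqs K N. pmf (play (exp3_restart K \<Delta> \<gamma>) x N) bs *
                        (\<Sum>t\<in>{s0+1..e}. x t (bs ! (t - 1))))"
  have G0: "0 \<le> G i" unfolding G_def using x i by (intro sum_nonneg) auto
  have GD: "G i \<le> real \<Delta>"
  proof -
    have "G i \<le> (\<Sum>t\<in>{s0+1..e}. 1)" unfolding G_def using x i by (intro sum_mono) auto
    then show ?thesis using e by simp
  qed
  have "(\<Sum>t\<in>{s0+1..e}. \<Sum>k\<in>{1..K}. x t k) = (\<Sum>k\<in>{1..K}. G k)"
    unfolding G_def by (rule sum.swap)
  also have "\<dots> \<le> real K * G i" using sum_mono[of "{1..K}" G "\<lambda>_. G i"] best unfolding G_def by simp
  finally have "coef_quad K \<gamma> * (\<Sum>t\<in>{s0+1..e}. \<Sum>k\<in>{1..K}. x t k) \<le> coef_quad K \<gamma> * (real K * G i)"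
    using g e_minus_2_nonneg by (intro mult_left_mono) (auto simp: coef_quad_def)
  then have "\<gamma> / real K * G i \<le> ln (real K) + coef_lin K \<gamma> * R + coef_quad K \<gamma> * (real K * G i)"
    using expected_potential_bound[where x=x, OF g K D e x i] unfolding G_def R_def by linarith
  then have "G i - R \<le> (exp 1 - 1) * \<gamma> * G i + real K * ln (real K) / \<gamma>"
    by (rule exp3_tradeoff[OF g K G0])
  also have "\<dots> \<le> (exp 1 - 1) * \<gamma> * real \<Delta> + real K * ln (real K) / \<gamma>"
    using GD g e_minus_2_nonneg by (simp add: mult_left_mono)
  finally show ?thesis unfolding G_def R_def .
qed

text \<open>If the tuned gamma is capped
  at 1 the bound is trivial, since both rewards lie in [0, Delta].\<close>

lemma exp3_batch_bound:
  assumes K: "K \<ge> 2" and D: "\<Delta> \<ge> 1" "s0 = q * \<Delta>"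
    and e: "s0 \<le> e" "e \<le> s0 + \<Delta>" "e \<le> N"
    and x: "\<And>t k. t \<in> {s0+1..e} \<Longrightarrow> k \<in> {1..K} \<Longrightarrow> 0 \<le> x t k \<and> x t k \<le> 1"
  defines "\<gamma> \<equiv> min 1 (sqrt (real K * ln (real K) / ((exp 1 - 1) * real \<Delta>)))"
  shows "Max ((\<lambda>k. \<Sum>t\<in>{s0+1..e}. x t k) ` {1..K})
     - (\<Sum>bs\<in>arm_seqs K N. pmf (play (exp3_restart K \<Delta> \<gamma>) x N) bs * (\<Sum>t\<in>{s0+1..e}. x t (bs ! (t - 1))))
     \<le> 2 * sqrt (exp 1 - 1) * sqrt (real \<Delta> * real K * ln (real K))"
proof -
  define G where "G k = (\<Sum>t\<in>{s0+1..e}. x t k)" for k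
  define R where "R = (\<Sum>bs\<in>arm_seqs K N. pmf (play (exp3_restart K \<Delta> \<gamma>) x N) bs *
                        (\<Sum>t\<in>{s0+1..e}. x t (bs ! (t - 1))))"
  define A where "A = real K * ln (real K)"
  define c where "c = exp 1 - (1::real)"
  have K1: "K \<ge> 1" using K by simp
  have Apos: "0 < A" unfolding A_def using K by simp
  have c1: "1 \<le> c" unfolding c_def using e_minus_2_nonneg by simp
  have Dpos: "0 < real \<Delta>" using D by simp
  obtain i where i: "i \<in> {1..K}" and Mi: "Max (G ` {1..K}) = G i"
    using Max_in[of "G ` {1..K}"] K by fastforce
  have best: "G k \<le> G i" if "k \<in> {1..K}" for k
    using that Mi by (metis Max_ge finite_imageI finite_atLeastAtMost image_eqI)
  have "G i - R \<le> 2 * sqrt c * sqrt (real \<Delta> * A)"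
  proof (cases "sqrt (A / (c * real \<Delta>)) < 1")
    case False
    then have "c * real \<Delta> \<le> A" using c1 Dpos by (simp add: not_less field_simps)
    then have "real \<Delta> \<le> 2 * sqrt c * sqrt (real \<Delta> * A)" using trivial_regime c1 Dpos by blast
    moreover have "G i \<le> real \<Delta>"
      using sum_mono[of "{s0+1..e}" "\<lambda>t. x t i" "\<lambda>_. 1"] x i e unfolding G_def by auto
    moreover have "0 \<le> R" unfolding R_def
      using x arm_seqs_nth[of _ K N] e by (intro sum_nonneg mult_nonneg_nonneg) auto
    ultimately show ?thesis by simp
  next
    case True
    have gam: "\<gamma> = sqrt (A / (c * real \<Delta>))"
      using True unfolding \<gamma>_def A_def c_def by simp
    have g: "0 < \<gamma>" "\<gamma> < 1" unfolding gam using Apos c1 Dpos True by auto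
    have "G i - R \<le> c * \<gamma> * real \<Delta> + A / \<gamma>"
      using exp3_best_arm_bound[where x=x, OF g K1 D e x i best[unfolded G_def]] unfolding G_def R_def c_def A_def .
    also have "\<dots> = 2 * sqrt c * sqrt (real \<Delta> * A)"
      unfolding gam using c1 by (intro balanced_gamma[OF Apos _ Dpos]) simp
    finally show ?thesis .
  qed
  moreover have "2 * sqrt c * sqrt (real \<Delta> * A) = 2 * sqrt (exp 1 - 1) * sqrt (real \<Delta> * real K * ln (real K))"
    unfolding c_def A_def by (simp add: mult.assoc)
  ultimately show ?thesis using Mi unfolding G_def R_def by simp
qed

text \<open>Integrating the fixed-table bound over the reward table: restarted Exp3 satisfies the
  per-batch hypothesis of regret_le_batch_bound with B = 2 sqrt(e-1) sqrt(Delta K ln K).\<close>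

lemma exp3_batch_regret:
  assumes K: "K \<ge> 2" and D: "\<Delta> \<ge> 1" and \<nu>: "\<nu> \<in> envs K T VT" and j: "j \<ge> 1"
  defines "\<gamma> \<equiv> min 1 (sqrt (real K * ln (real K) / ((exp 1 - 1) * real \<Delta>)))"
  shows "exp_max K T \<nu> (batch \<Delta> T j) - pol_reward T (exp3_restart K \<Delta> \<gamma>) \<nu> (batch \<Delta> T j)
     \<le> 2 * sqrt (exp 1 - 1) * sqrt (real \<Delta> * real K * ln (real K))"
proof -
  let ?\<pi> = "exp3_restart K \<Delta> \<gamma>"
  let ?B = "2 * sqrt (exp 1 - 1) * sqrt (real \<Delta> * real K * ln (real K))"
  have K1: "K \<ge> 1" using K by simp
  have g: "0 \<le> \<gamma>" "\<gamma> \<le> 1" unfolding \<gamma>_def using e_minus_2_nonneg K by auto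
  have v: "valid_policy K ?\<pi>" by (rule valid_exp3[OF K1 g])
  have pm: "policy_measurable T ?\<pi> \<nu>" by (rule exp3_measurable[OF \<nu> K1 g])
  interpret P: prob_space "omega T \<nu>" by (rule prob_omega[OF \<nu>])
  define s0 where "s0 = (j - 1) * \<Delta>"
  define e where "e = min (j * \<Delta>) T"
  have bS: "batch \<Delta> T j = {s0+1..e}" unfolding batch_def s0_def e_def by auto
  show ?thesis
  proof (cases "s0 \<le> e")
    case False
    then have "batch \<Delta> T j = {}" unfolding bS by auto
    moreover have "0 \<le> ?B" using K e_minus_2_nonneg by simp
    ultimately show ?thesis using K by (simp add: exp_max_def pol_reward_def)
  next
    case True
    have e: "e \<le> s0 + \<Delta>" "e \<le> T" unfolding e_def s0_def using j by (cases j; auto)+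
    let ?S = "{s0+1..e}"
    have ST: "?S \<subseteq> {1..T}" using e by auto
    define Mx where "Mx x = Max ((\<lambda>k. \<Sum>t\<in>?S. x t k) ` {1..K})" for x :: "nat \<Rightarrow> nat \<Rightarrow> real"
    define R where "R x = (\<Sum>bs\<in>arm_seqs K T. pmf (play ?\<pi> x T) bs * (\<Sum>t\<in>?S. x t (bs ! (t - 1))))" for x
    have iM: "integrable (omega T \<nu>) Mx" unfolding Mx_def by (rule integrable_max_reward[OF \<nu> K1 ST])
    have iR: "integrable (omega T \<nu>) R" unfolding R_def by (rule integrable_collected_reward[OF \<nu> pm ST])
    have "Mx x - R x \<le> ?B" if x: "x \<in> space (omega T \<nu>)" for x
      unfolding Mx_def R_def \<gamma>_def
      using space_omega(1)[OF \<nu> x] ST by (intro exp3_batch_bound[OF K D s0_def True e]) auto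
    then have "(\<integral>x. Mx x - R x \<partial>omega T \<nu>) \<le> (\<integral>x. ?B \<partial>omega T \<nu>)"
      using iM iR by (intro integral_mono) auto
    then show ?thesis unfolding bS exp_max_def pol_reward_collected[OF \<nu> v pm ST] Mx_def[symmetric] R_def[symmetric]
      using iM iR P.prob_space by simp
  qed
qed

lemma exp3_restart_regret:
  assumes K: "K \<ge> 2" and D: "\<Delta> \<ge> 1"
  shows "regret K T VT
           (exp3_restart K \<Delta> (min 1 (sqrt (real K * ln (real K) / ((exp 1 - 1) * real \<Delta>)))))
         \<le> ereal ((real T / real \<Delta> + 1) * (2 * sqrt (exp 1 - 1) * sqrt (real \<Delta> * real K * ln (real K)))
                  + 2 * real \<Delta> * VT)"
proof -
  let ?\<gamma> = "min 1 (sqrt (real K * ln (real K) / ((exp 1 - 1) * real \<Delta>)))"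
  let ?B = "2 * sqrt (exp 1 - 1) * sqrt (real \<Delta> * real K * ln (real K))"
  have K1: "K \<ge> 1" using K by simp
  have g: "0 \<le> ?\<gamma>" "?\<gamma> \<le> 1" using e_minus_2_nonneg K by auto
  have "regret K T VT (exp3_restart K \<Delta> ?\<gamma>) \<le> ereal (real_of_int \<lceil>real T / real \<Delta>\<rceil> * ?B + 2 * real \<Delta> * VT)"
    using exp3_measurable[OF _ K1 g] exp3_batch_regret[OF K D]
    by (intro regret_le_batch_bound[OF K1 D valid_exp3[OF K1 g]]) auto
  also have "\<dots> \<le> ereal ((real T / real \<Delta> + 1) * ?B + 2 * real \<Delta> * VT)"
    using K e_minus_2_nonneg by (simp add: mult_right_mono)
  finally show ?thesis .
qed

theorem mainTheorem4:
  fixes T K \<Delta> :: nat and VT :: real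
  assumes "T \<ge> 1" and "K \<ge> 2" and "VT > 0" and "\<Delta> \<in> {1..T}"
  shows "(\<forall>(\<pi> :: nat \<Rightarrow> (nat \<times> real) list \<Rightarrow> nat pmf) (B :: real).
            valid_policy K \<pi>
          \<longrightarrow> (\<forall>\<nu>\<in>envs K T VT. policy_measurable T \<pi> \<nu>)
          \<longrightarrow> (\<forall>\<nu>\<in>envs K T VT. \<forall>j\<in>{1..nat \<lceil>real T / real \<Delta>\<rceil>}.
                 exp_max K T \<nu> (batch \<Delta> T j) - pol_reward T \<pi> \<nu> (batch \<Delta> T j) \<le> B)
          \<longrightarrow> regret K T VT \<pi> \<le> ereal (real_of_int \<lceil>real T / real \<Delta>\<rceil> * B + 2 * real \<Delta> * VT))
       \<and> regret K T VT
           (exp3_restart K \<Delta> (min 1 (sqrt (real K * ln (real K) / ((exp 1 - 1) * real \<Delta>)))))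
         \<le> ereal ((real T / real \<Delta> + 1) * (2 * sqrt (exp 1 - 1) * sqrt (real \<Delta> * real K * ln (real K)))
                  + 2 * real \<Delta> * VT)"
proof -
  have K: "K \<ge> 1" and D: "\<Delta> \<ge> 1" using assms by auto
  show ?thesis
    using regret_le_batch_bound[OF K D] exp3_restart_regret[OF assms(2) D] by blast
qed

end
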